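(* Let $(P,\le,A_1\ldots A_k)$ be a regular poset of width $w$ and let $(u,s)$ be any characteristics. Then the poset $(\mathcal{P}(u,s),\le_{(u,s)})$ of active nodes with characteristics $(u,s)$ has width at most $\lfloor\sqrt{w}\rfloor$.
   Context: Let $(P,\le)$ be a finite poset of width $w$. For $A\subseteq P$ let $A{\uparrow}=\{y: x\le y\text{ for some }x\in A\}$, $A{\downarrow}=\{y: y\le x\text{ for some }x\in A\}$. For maximal antichains $A,B$ write $A\sqsubseteq B$ if $A\subseteq B{\downarrow}$, and $A\sqsubset B$ if also $A\ne B$. For disjoint antichains $A\sqsubset B$, $(A,B,<)$ is the bipartite graph with classes $A,B$ and edges $(a<b)$ for $a\in A,b\in B$, $a<b$; it is regular if every edge lies in a perfect matching. A regular poset $(P,\le,A_1\ldots A_k)$: $A_1,\dots,A_k$ are maximum antichains partitioning $P$, $(\{A_1,\dots,A_k\},\sqsubseteq)$ is a linear order with minimum $A_1$ and maximum $A_2$, $a<b$ for all $a\in A_1,b\in A_2$, and for every $t\in[2,k]$ and every $A_p\sqsubset A_s$ consecutive in $(\{A_1,\dots,A_t\},\sqsubseteq)$ the graph $(A_p,A_s,<)$ is regular. A node is a bipartite graph $N=(X,Y,<)$ where, for some such consecutive pair $A_p\sqsubset A_s$ (at some stage $t$), $X\subseteq A_p$, $Y\subseteq A_s$ and $X\cup Y$ is the vertex set of a connected component of $(A_p,A_s,<)$. Its width is $|X|=|Y|$, $\mathrm{Int}(N)=X{\uparrow}\cap Y{\downarrow}$, and its surplus is the largest $k$ such that $|A{\uparrow}\cap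 Y|\ge\min\{|A|+k,|Y|\}$ for all non-empty $A\subseteq X$ ($\infty$ if $N$ is complete bipartite); its characteristics is the pair (width, surplus). Node tree: the set of all nodes, where when for $t\ge3$ the antichain $A_t$ is inserted between $A_p\sqsubset A_s$ consecutive at stage $t-1$, each node $M$ of $(A_p,A_t,<)$ or $(A_t,A_s,<)$ is a child of the unique node $N$ of $(A_p,A_s,<)$ with $\mathrm{Int}(M)\subset\mathrm{Int}(N)$; it is a rooted tree with root $(A_1,A_2,<)$. A Dilworth clique of width $m$ in a node $(X,Y,<)$ is a set $\{x_1,\dots,x_m,y_1,\dots,y_m\}$ with $x_i\in X$, $y_i\in Y$, $x_i<y_j$ for all $i,j\in[m]$, such that the edges $x_1<y_1,\dots,x_m<y_m$ extend to a perfect matching of $(X,Y,<)$. A node is active if it contains a Dilworth clique of width $\lceil\sqrt{w}\rceil$ and no proper ancestor of it in the node tree has the same characteristics. For each active node $N$ fix a Dilworth clique $R(N)$ of width $\lceil\sqrt w\rceil$ in $N$. $\mathcal{P}(u,s)$ is the set of active nodes with characteristics $(u,s)$, and for $N,K\in\mathcal{P}(u,s)$, $N<_{(u,s)}K$ iff there are a maximal element $x$ of $(R(N),\le)$ and a minimal element $y$ of $(R(K),\le)$ with $x\le y$; $\le_{(u,s)}$ is the resulting partial order. *)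

theory Defs
  imports Main "HOL-Library.Extended_Nat"
begin

definition po_on :: "'a set \<Rightarrow> ('a \<Rightarrow> 'a \<Rightarrow> bool) \<Rightarrow> bool" where
  "po_on P le \<longleftrightarrow> (\<forall>x\<in>P. le x x)
     \<and> (\<forall>x\<in>P. \<forall>y\<in>P. le x y \<and> le y x \<longrightarrow> x = y)
     \<and> (\<forall>x\<in>P. \<forall>y\<in>P. \<forall>z\<in>P. le x y \<and> le y z \<longrightarrow> le x z)"

definition lt :: "('a \<Rightarrow> 'a \<Rightarrow> bool) \<Rightarrow> 'a \<Rightarrow> 'a \<Rightarrow> bool" where
  "lt le x y \<longleftrightarrow> le x y \<and> x \<noteq> y"

definition antichain_on :: "'a set \<Rightarrow> ('a \<Rightarrow> 'a \<Rightarrow> bool) \<Rightarrow> 'a set \<Rightarrow> bool" where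
  "antichain_on D r S \<longleftrightarrow> S \<subseteq> D \<and> (\<forall>x\<in>S. \<forall>y\<in>S. r x y \<longrightarrow> x = y)"

definition rel_width :: "'a set \<Rightarrow> ('a \<Rightarrow> 'a \<Rightarrow> bool) \<Rightarrow> nat" where
  "rel_width D r = Max (card ` {S. antichain_on D r S})"

definition maximum_antichain :: "'a set \<Rightarrow> ('a \<Rightarrow> 'a \<Rightarrow> bool) \<Rightarrow> 'a set \<Rightarrow> bool" where
  "maximum_antichain P le S \<longleftrightarrow> antichain_on P le S \<and> card S = rel_width P le"

definition maximal_antichain :: "'a set \<Rightarrow> ('a \<Rightarrow> 'a \<Rightarrow> bool) \<Rightarrow> 'a set \<Rightarrow> bool" where
  "maximal_antichain P le S \<longleftrightarrow> antichain_on P le S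
     \<and> (\<forall>T. antichain_on P le T \<and> S \<subseteq> T \<longrightarrow> T = S)"

definition up_set :: "'a set \<Rightarrow> ('a \<Rightarrow> 'a \<Rightarrow> bool) \<Rightarrow> 'a set \<Rightarrow> 'a set" where
  "up_set P le A = {y\<in>P. \<exists>x\<in>A. le x y}"

definition down_set :: "'a set \<Rightarrow> ('a \<Rightarrow> 'a \<Rightarrow> bool) \<Rightarrow> 'a set \<Rightarrow> 'a set" where
  "down_set P le A = {y\<in>P. \<exists>x\<in>A. le y x}"

definition ac_le :: "'a set \<Rightarrow> ('a \<Rightarrow> 'a \<Rightarrow> bool) \<Rightarrow> 'a set \<Rightarrow> 'a set \<Rightarrow> bool" where
  "ac_le P le A B \<longleftrightarrow> maximal_antichain P le A \<and> maximal_antichain P le B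
     \<and> A \<subseteq> down_set P le B"

definition ac_less :: "'a set \<Rightarrow> ('a \<Rightarrow> 'a \<Rightarrow> bool) \<Rightarrow> 'a set \<Rightarrow> 'a set \<Rightarrow> bool" where
  "ac_less P le A B \<longleftrightarrow> ac_le P le A B \<and> A \<noteq> B"

definition perfect_matching :: "('a \<Rightarrow> 'a \<Rightarrow> bool) \<Rightarrow> 'a set \<Rightarrow> 'a set \<Rightarrow> ('a \<Rightarrow> 'a) \<Rightarrow> bool" where
  "perfect_matching le X Y f \<longleftrightarrow> bij_betw f X Y \<and> (\<forall>x\<in>X. lt le x (f x))"

definition regular_bip :: "('a \<Rightarrow> 'a \<Rightarrow> bool) \<Rightarrow> 'a set \<Rightarrow> 'a set \<Rightarrow> bool" where
  "regular_bip le A B \<longleftrightarrow>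
     (\<forall>a\<in>A. \<forall>b\<in>B. lt le a b \<longrightarrow> (\<exists>f. perfect_matching le A B f \<and> f a = b))"

definition bip_edge :: "('a \<Rightarrow> 'a \<Rightarrow> bool) \<Rightarrow> 'a set \<Rightarrow> 'a set \<Rightarrow> 'a \<Rightarrow> 'a \<Rightarrow> bool" where
  "bip_edge le A B x y \<longleftrightarrow> (x \<in> A \<and> y \<in> B \<and> lt le x y) \<or> (y \<in> A \<and> x \<in> B \<and> lt le y x)"

definition bip_component :: "('a \<Rightarrow> 'a \<Rightarrow> bool) \<Rightarrow> 'a set \<Rightarrow> 'a set \<Rightarrow> 'a set \<Rightarrow> bool" where
  "bip_component le A B C \<longleftrightarrow> C \<noteq> {} \<and> C \<subseteq> A \<union> B
     \<and> (\<forall>x\<in>C. \<forall>y\<in>C. (bip_edge le A B)\<^sup>*\<^sup>* x y)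
     \<and> (\<forall>x\<in>C. \<forall>y. bip_edge le A B x y \<longrightarrow> y \<in> C)"

definition consecutive :: "'a set \<Rightarrow> ('a \<Rightarrow> 'a \<Rightarrow> bool) \<Rightarrow> (nat \<Rightarrow> 'a set) \<Rightarrow> nat \<Rightarrow> nat \<Rightarrow> nat \<Rightarrow> bool" where
  "consecutive P le A t p s \<longleftrightarrow> p \<in> {1..t} \<and> s \<in> {1..t} \<and> ac_less P le (A p) (A s)
     \<and> \<not> (\<exists>q\<in>{1..t}. ac_less P le (A p) (A q) \<and> ac_less P le (A q) (A s))"

definition regular_poset :: "'a set \<Rightarrow> ('a \<Rightarrow> 'a \<Rightarrow> bool) \<Rightarrow> (nat \<Rightarrow> 'a set) \<Rightarrow> nat \<Rightarrow> bool" where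
  "regular_poset P le A k \<longleftrightarrow> finite P \<and> po_on P le \<and> 2 \<le> k
     \<and> (\<forall>i\<in>{1..k}. maximum_antichain P le (A i))
     \<and> (\<forall>i\<in>{1..k}. \<forall>j\<in>{1..k}. i \<noteq> j \<longrightarrow> A i \<inter> A j = {})
     \<and> (\<Union>i\<in>{1..k}. A i) = P
     \<and> (\<forall>i\<in>{1..k}. \<forall>j\<in>{1..k}. ac_le P le (A i) (A j) \<or> ac_le P le (A j) (A i))
     \<and> (\<forall>i\<in>{1..k}. ac_le P le (A 1) (A i) \<and> ac_le P le (A i) (A 2))
     \<and> (\<forall>a\<in>A 1. \<forall>b\<in>A 2. lt le a b)
     \<and> (\<forall>t\<in>{2..k}. \<forall>p s. consecutive P le A t p s \<longrightarrow> regular_bip le (A p) (A s))"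

definition node_of :: "('a \<Rightarrow> 'a \<Rightarrow> bool) \<Rightarrow> 'a set \<Rightarrow> 'a set \<Rightarrow> 'a set \<times> 'a set \<Rightarrow> bool" where
  "node_of le Ap As N \<longleftrightarrow> fst N \<subseteq> Ap \<and> snd N \<subseteq> As \<and> bip_component le Ap As (fst N \<union> snd N)"

definition is_node :: "'a set \<Rightarrow> ('a \<Rightarrow> 'a \<Rightarrow> bool) \<Rightarrow> (nat \<Rightarrow> 'a set) \<Rightarrow> nat \<Rightarrow> 'a set \<times> 'a set \<Rightarrow> bool" where
  "is_node P le A k N \<longleftrightarrow>
     (\<exists>t\<in>{2..k}. \<exists>p s. consecutive P le A t p s \<and> node_of le (A p) (A s) N)"

definition node_int :: "'a set \<Rightarrow> ('a \<Rightarrow> 'a \<Rightarrow> bool) \<Rightarrow> 'a set \<times> 'a set \<Rightarrow> 'a set" where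
  "node_int P le N = up_set P le (fst N) \<inter> down_set P le (snd N)"

definition node_child :: "'a set \<Rightarrow> ('a \<Rightarrow> 'a \<Rightarrow> bool) \<Rightarrow> (nat \<Rightarrow> 'a set) \<Rightarrow> nat
    \<Rightarrow> 'a set \<times> 'a set \<Rightarrow> 'a set \<times> 'a set \<Rightarrow> bool" where
  "node_child P le A k M N \<longleftrightarrow>
     (\<exists>t\<in>{3..k}. \<exists>p s. consecutive P le A (t - 1) p s
        \<and> ac_less P le (A p) (A t) \<and> ac_less P le (A t) (A s)
        \<and> node_of le (A p) (A s) N
        \<and> (node_of le (A p) (A t) M \<or> node_of le (A t) (A s) M)
        \<and> node_int P le M \<subset> node_int P le N)"

definition surplus :: "'a set \<Rightarrow> ('a \<Rightarrow> 'a \<Rightarrow> bool) \<Rightarrow> 'a set \<times> 'a set \<Rightarrow> enat" where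
  "surplus P le N =
     (if (\<forall>x\<in>fst N. \<forall>y\<in>snd N. lt le x y) then \<infinity>
      else enat (GREATEST k::nat. \<forall>S. S \<subseteq> fst N \<and> S \<noteq> {} \<longrightarrow>
               card (up_set P le S \<inter> snd N) \<ge> min (card S + k) (card (snd N))))"

definition characteristics :: "'a set \<Rightarrow> ('a \<Rightarrow> 'a \<Rightarrow> bool) \<Rightarrow> 'a set \<times> 'a set \<Rightarrow> nat \<times> enat" where
  "characteristics P le N = (card (fst N), surplus P le N)"

definition dilworth_clique :: "('a \<Rightarrow> 'a \<Rightarrow> bool) \<Rightarrow> 'a set \<times> 'a set \<Rightarrow> nat \<Rightarrow> 'a set \<Rightarrow> bool" where
  "dilworth_clique le N m C \<longleftrightarrow>
     (\<exists>xs ys. inj_on xs {..<m} \<and> inj_on ys {..<m}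
        \<and> xs ` {..<m} \<subseteq> fst N \<and> ys ` {..<m} \<subseteq> snd N
        \<and> (\<forall>i<m. \<forall>j<m. lt le (xs i) (ys j))
        \<and> (\<exists>f. perfect_matching le (fst N) (snd N) f \<and> (\<forall>i<m. f (xs i) = ys i))
        \<and> C = xs ` {..<m} \<union> ys ` {..<m})"

definition clique_size :: "'a set \<Rightarrow> ('a \<Rightarrow> 'a \<Rightarrow> bool) \<Rightarrow> nat" where
  "clique_size P le = nat \<lceil>sqrt (real (rel_width P le))\<rceil>"

definition active :: "'a set \<Rightarrow> ('a \<Rightarrow> 'a \<Rightarrow> bool) \<Rightarrow> (nat \<Rightarrow> 'a set) \<Rightarrow> nat \<Rightarrow> 'a set \<times> 'a set \<Rightarrow> bool" where
  "active P le A k N \<longleftrightarrow> is_node P le A k N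
     \<and> (\<exists>C. dilworth_clique le N (clique_size P le) C)
     \<and> \<not> (\<exists>K. (node_child P le A k)\<^sup>+\<^sup>+ N K
              \<and> characteristics P le K = characteristics P le N)"

definition active_nodes :: "'a set \<Rightarrow> ('a \<Rightarrow> 'a \<Rightarrow> bool) \<Rightarrow> (nat \<Rightarrow> 'a set) \<Rightarrow> nat
    \<Rightarrow> nat \<Rightarrow> enat \<Rightarrow> ('a set \<times> 'a set) set" where
  "active_nodes P le A k u s = {N. active P le A k N \<and> characteristics P le N = (u, s)}"

definition maximal_in :: "('a \<Rightarrow> 'a \<Rightarrow> bool) \<Rightarrow> 'a set \<Rightarrow> 'a \<Rightarrow> bool" where
  "maximal_in le C x \<longleftrightarrow> x \<in> C \<and> \<not> (\<exists>y\<in>C. lt le x y)"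

definition minimal_in :: "('a \<Rightarrow> 'a \<Rightarrow> bool) \<Rightarrow> 'a set \<Rightarrow> 'a \<Rightarrow> bool" where
  "minimal_in le C x \<longleftrightarrow> x \<in> C \<and> \<not> (\<exists>y\<in>C. lt le y x)"

definition node_less :: "('a \<Rightarrow> 'a \<Rightarrow> bool) \<Rightarrow> ('a set \<times> 'a set \<Rightarrow> 'a set)
    \<Rightarrow> 'a set \<times> 'a set \<Rightarrow> 'a set \<times> 'a set \<Rightarrow> bool" where
  "node_less le R N K \<longleftrightarrow> (\<exists>x y. maximal_in le (R N) x \<and> minimal_in le (R K) y \<and> le x y)"

end

theory Submission
  imports Defs "HOL-Library.Disjoint_Sets"
begin

(* Let S be an antichain of active nodes with characteristics (u, s) and let c be the ceiling of
   sqrt w. Two nodes of S are never ancestor and descendant of each other, since active nodes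
   with equal characteristics are not; and no top element of the clique R(K) of one node of S
   lies below a bottom element of the clique of another one, since S is an antichain.
   Going up the node tree one shows: if AA is a set of nodes of S below the node N = (X, Y)
   and B is a set of elements of X below no bottom element of the cliques of AA, then at least
   |B| + c |AA| elements of Y lie above an element of B or above a top element of one of these
   cliques. For AA = {} or AA = {N} a perfect matching of N maps B injectively into Y,
   avoiding the c top elements of R(N). Otherwise the children of N are the nodes created by
   inserting a layer A t between the two layers of N: the claim for the lower children carries
   B up to A t, and the claim for the upper children carries the result up to Y. At the root
   (A 1, A 2) this gives c |S| <= |A 2| = w, hence |S| <= floor (sqrt w). *)

section \<open>Connected components of a bipartite comparability graph\<close>

lemma bip_edge_sym: "bip_edge le X Y x y \<longleftrightarrow> bip_edge le X Y y x"
  unfolding bip_edge_def by auto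

lemma bip_edge_rtranclp_sym:
  "(bip_edge le X Y)\<^sup>*\<^sup>* x y \<Longrightarrow> (bip_edge le X Y)\<^sup>*\<^sup>* y x"
  by (induction rule: rtranclp_induct)
    (auto intro: converse_rtranclp_into_rtranclp bip_edge_sym[THEN iffD1])

lemma bip_edge_rtranclp_in_vertices:
  "(bip_edge le X Y)\<^sup>*\<^sup>* v z \<Longrightarrow> v \<in> X \<union> Y \<Longrightarrow> z \<in> X \<union> Y"
  by (induction rule: rtranclp_induct) (auto simp: bip_edge_def)

definition bip_node_at :: "('a \<Rightarrow> 'a \<Rightarrow> bool) \<Rightarrow> 'a set \<Rightarrow> 'a set \<Rightarrow> 'a \<Rightarrow> 'a set \<times> 'a set" where
  "bip_node_at le X Y v =
     ({z \<in> X. (bip_edge le X Y)\<^sup>*\<^sup>* v z}, {z \<in> Y. (bip_edge le X Y)\<^sup>*\<^sup>* v z})"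

lemma mem_bip_node_at: "v \<in> X \<union> Y \<Longrightarrow> v \<in> fst (bip_node_at le X Y v) \<union> snd (bip_node_at le X Y v)"
  by (auto simp: bip_node_at_def)

lemma node_of_bip_node_at:
  assumes "v \<in> X \<union> Y"
  shows "node_of le X Y (bip_node_at le X Y v)"
proof -
  let ?C = "{z. (bip_edge le X Y)\<^sup>*\<^sup>* v z}"
  have vertices: "fst (bip_node_at le X Y v) \<union> snd (bip_node_at le X Y v) = ?C"
    using bip_edge_rtranclp_in_vertices[OF _ assms] by (auto simp: bip_node_at_def)
  have "bip_component le X Y ?C"
    unfolding bip_component_def
  proof (intro conjI ballI allI impI)
    show "?C \<noteq> {}" "?C \<subseteq> X \<union> Y"
      using bip_edge_rtranclp_in_vertices[OF _ assms] by auto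
  next
    fix x y assume "x \<in> ?C" "y \<in> ?C"
    then show "(bip_edge le X Y)\<^sup>*\<^sup>* x y"
      using bip_edge_rtranclp_sym rtranclp_trans by (metis mem_Collect_eq)
  next
    fix x y assume "x \<in> ?C" "bip_edge le X Y x y"
    then show "y \<in> ?C" by (simp add: rtranclp.rtrancl_into_rtrancl)
  qed
  then show ?thesis
    unfolding node_of_def vertices by (auto simp: bip_node_at_def)
qed

lemma node_of_reach:
  assumes "node_of le X Y N" "x \<in> fst N \<union> snd N" "(bip_edge le X Y)\<^sup>*\<^sup>* x y"
  shows "y \<in> fst N \<union> snd N"
  using assms(3,2) assms(1) unfolding node_of_def bip_component_def
  by (induction rule: rtranclp_induct) auto

lemma node_of_connected:
  "node_of le X Y N \<Longrightarrow> x \<in> fst N \<union> snd N \<Longrightarrow> y \<in> fst N \<union> snd N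
    \<Longrightarrow> (bip_edge le X Y)\<^sup>*\<^sup>* x y"
  unfolding node_of_def bip_component_def by blast

lemma node_of_eq:
  assumes "X \<inter> Y = {}" "node_of le X Y N" "node_of le X Y N'"
    and "z \<in> fst N \<union> snd N" "z \<in> fst N' \<union> snd N'"
  shows "N = N'"
proof -
  have "fst N \<union> snd N \<subseteq> fst N' \<union> snd N'" "fst N' \<union> snd N' \<subseteq> fst N \<union> snd N"
    using node_of_reach node_of_connected assms(2-5) by (meson subsetI)+
  then have "fst N \<union> snd N = fst N' \<union> snd N'" by blast
  moreover have "fst M = (fst M \<union> snd M) \<inter> X" "snd M = (fst M \<union> snd M) \<inter> Y"
    if "node_of le X Y M" for M
    using that assms(1) unfolding node_of_def by auto
  ultimately show ?thesis
    using assms(2,3) by (metis prod_eq_iff)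
qed

lemma node_of_disjoint:
  assumes "X \<inter> Y = {}" "node_of le X Y N" "node_of le X Y N'" "N \<noteq> N'"
  shows "fst N \<inter> fst N' = {}" "snd N \<inter> snd N' = {}"
  using node_of_eq[OF assms(1-3)] assms(4) by blast+

section \<open>Maximal antichains\<close>

locale poset_on =
  fixes P :: "'a set" and le :: "'a \<Rightarrow> 'a \<Rightarrow> bool"
  assumes po: "po_on P le"
begin

lemma le_refl_P: "x \<in> P \<Longrightarrow> le x x"
  using po unfolding po_on_def by blast

lemma le_antisym_P: "x \<in> P \<Longrightarrow> y \<in> P \<Longrightarrow> le x y \<Longrightarrow> le y x \<Longrightarrow> x = y"
  using po unfolding po_on_def by blast

lemma le_trans_P: "x \<in> P \<Longrightarrow> y \<in> P \<Longrightarrow> z \<in> P \<Longrightarrow> le x y \<Longrightarrow> le y z \<Longrightarrow> le x z"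
  using po unfolding po_on_def by blast

lemma up_set_mono: "X \<subseteq> Y \<Longrightarrow> up_set P le X \<subseteq> up_set P le Y"
  unfolding up_set_def by blast

lemma subset_up_set: "X \<subseteq> P \<Longrightarrow> X \<subseteq> up_set P le X"
  unfolding up_set_def using le_refl_P by blast

lemma subset_down_set: "X \<subseteq> P \<Longrightarrow> X \<subseteq> down_set P le X"
  unfolding down_set_def using le_refl_P by blast

lemma down_set_mono: "X \<subseteq> Y \<Longrightarrow> down_set P le X \<subseteq> down_set P le Y"
  unfolding down_set_def by blast

lemma up_set_up_set_subset: "A \<subseteq> P \<Longrightarrow> up_set P le (up_set P le A) \<subseteq> up_set P le A"
  unfolding up_set_def by (blast intro: le_trans_P)

lemma up_set_disjoint_down_set:
  assumes "A \<subseteq> P" "B \<subseteq> P" "A \<inter> down_set P le B = {}"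
  shows "up_set P le A \<inter> down_set P le B = {}"
  using assms unfolding up_set_def down_set_def by (blast intro: le_trans_P)

lemma node_int_mono:
  assumes "fst N \<union> snd N \<subseteq> P" "fst M \<union> snd M \<subseteq> node_int P le N"
  shows "node_int P le M \<subseteq> node_int P le N"
  using assms unfolding node_int_def up_set_def down_set_def by (blast intro: le_trans_P)

lemma maximal_antichain_subset: "maximal_antichain P le X \<Longrightarrow> X \<subseteq> P"
  unfolding maximal_antichain_def antichain_on_def by blast

lemma maximal_antichain_comparable:
  assumes "maximal_antichain P le X" "z \<in> P" "z \<notin> X"
  shows "\<exists>x\<in>X. le z x \<or> le x z"
proof (rule ccontr)
  assume "\<not> ?thesis"
  with assms have "antichain_on P le (insert z X)"
    unfolding maximal_antichain_def antichain_on_def by blast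
  then show False
    using assms unfolding maximal_antichain_def by blast
qed

lemma ac_le_refl: "maximal_antichain P le X \<Longrightarrow> ac_le P le X X"
  unfolding ac_le_def down_set_def using maximal_antichain_subset le_refl_P by blast

lemma ac_le_down: "ac_le P le X Y \<Longrightarrow> x \<in> X \<Longrightarrow> \<exists>y\<in>Y. le x y"
  unfolding ac_le_def down_set_def by blast

lemma ac_le_up:
  assumes XY: "ac_le P le X Y" and y: "y \<in> Y"
  shows "\<exists>x\<in>X. le x y"
proof (rule ccontr)
  assume none: "\<not> ?thesis"
  have X: "maximal_antichain P le X" and Y: "maximal_antichain P le Y"
    using XY unfolding ac_le_def by blast+
  have yP: "y \<in> P" using maximal_antichain_subset[OF Y] y by blast
  have "y \<notin> X" using none le_refl_P[OF yP] by blast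
  then obtain x where x: "x \<in> X" "le y x"
    using maximal_antichain_comparable[OF X yP] none by blast
  obtain y' where y': "y' \<in> Y" "le x y'" using ac_le_down[OF XY x(1)] by blast
  have P: "x \<in> P" "y' \<in> P" using x(1) y'(1) X Y maximal_antichain_subset by blast+
  have "y = y'"
    using Y y y' le_trans_P[OF yP P x(2) y'(2)]
    unfolding maximal_antichain_def antichain_on_def by blast
  then have "x = y" using le_antisym_P[OF yP P(1) x(2)] y'(2) by blast
  then show False using none x(1) le_refl_P[OF yP] by blast
qed

lemma ac_le_trans: "ac_le P le X Y \<Longrightarrow> ac_le P le Y Z \<Longrightarrow> ac_le P le X Z"
  unfolding ac_le_def down_set_def using maximal_antichain_subset
  by (blast intro: le_trans_P)

lemma ac_le_antisym:
  assumes "ac_le P le X Y" "ac_le P le Y X"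
  shows "X = Y"
proof -
  have "X \<subseteq> Y" if XY: "ac_le P le X Y" and YX: "ac_le P le Y X" for X Y
  proof
    fix x assume x: "x \<in> X"
    obtain y where y: "y \<in> Y" "le x y" using ac_le_down[OF XY x] by blast
    obtain x' where x': "x' \<in> X" "le y x'" using ac_le_down[OF YX y(1)] by blast
    have X: "maximal_antichain P le X" and Y: "maximal_antichain P le Y"
      using XY unfolding ac_le_def by blast+
    have P: "x \<in> P" "y \<in> P" "x' \<in> P"
      using x y(1) x'(1) X Y maximal_antichain_subset by blast+
    have "x = x'"
      using X x x' le_trans_P[OF P y(2) x'(2)]
      unfolding maximal_antichain_def antichain_on_def by blast
    then show "x \<in> Y" using le_antisym_P[OF P(1,2) y(2)] x'(2) y(1) by blast
  qed
  then show ?thesis using assms by blast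
qed

lemma ac_less_trans: "ac_less P le X Y \<Longrightarrow> ac_less P le Y Z \<Longrightarrow> ac_less P le X Z"
  unfolding ac_less_def using ac_le_trans ac_le_antisym by blast

lemma ac_less_not_ac_le: "ac_less P le X Y \<Longrightarrow> \<not> ac_le P le Y X"
  unfolding ac_less_def using ac_le_antisym by blast

end

section \<open>The layers of a regular poset\<close>

lemma is_node_subset_P:
  assumes "regular_poset P le A k" "is_node P le A k N"
  shows "fst N \<union> snd N \<subseteq> P"
proof -
  obtain t p s where "consecutive P le A t p s" "t \<in> {2..k}" "node_of le (A p) (A s) N"
    using assms(2) unfolding is_node_def by blast
  then have "p \<in> {1..k}" "s \<in> {1..k}" "fst N \<subseteq> A p" "snd N \<subseteq> A s"
    unfolding consecutive_def node_of_def by auto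
  moreover have "(\<Union>i\<in>{1..k}. A i) = P" using assms(1) unfolding regular_poset_def by blast
  ultimately show ?thesis by blast
qed

lemma is_node_nonempty: "is_node P le A k N \<Longrightarrow> fst N \<union> snd N \<noteq> {}"
  unfolding is_node_def node_of_def bip_component_def by blast

locale regular_order =
  fixes P :: "'a set" and le :: "'a \<Rightarrow> 'a \<Rightarrow> bool" and A :: "nat \<Rightarrow> 'a set" and k :: nat
  assumes regular: "regular_poset P le A k"
    and nonempty: "P \<noteq> {}"

sublocale regular_order \<subseteq> poset_on
  using regular by unfold_locales (simp add: regular_poset_def)

context regular_order
begin

abbreviation layer_less :: "nat \<Rightarrow> nat \<Rightarrow> bool" where
  "layer_less i j \<equiv> ac_less P le (A i) (A j)"

lemma finite_P: "finite P"
  and two_le_k: "2 \<le> k"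
  and maximum_antichain_A: "i \<in> {1..k} \<Longrightarrow> maximum_antichain P le (A i)"
  and disjoint_A: "i \<in> {1..k} \<Longrightarrow> j \<in> {1..k} \<Longrightarrow> i \<noteq> j \<Longrightarrow> A i \<inter> A j = {}"
  and Union_A: "(\<Union>i\<in>{1..k}. A i) = P"
  and linear_A: "i \<in> {1..k} \<Longrightarrow> j \<in> {1..k} \<Longrightarrow> ac_le P le (A i) (A j) \<or> ac_le P le (A j) (A i)"
  and bounds_A: "i \<in> {1..k} \<Longrightarrow> ac_le P le (A 1) (A i) \<and> ac_le P le (A i) (A 2)"
  and bottom_below_top: "a \<in> A 1 \<Longrightarrow> b \<in> A 2 \<Longrightarrow> lt le a b"
  and regular_consecutive:
    "t \<in> {2..k} \<Longrightarrow> consecutive P le A t p s \<Longrightarrow> regular_bip le (A p) (A s)"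
  using regular unfolding regular_poset_def by blast+

lemma one_two_layers: "1 \<in> {1..k}" "2 \<in> {1..k}"
  using two_le_k by auto

lemma maximal_antichain_A: "i \<in> {1..k} \<Longrightarrow> maximal_antichain P le (A i)"
  using bounds_A unfolding ac_le_def by blast

lemma A_subset_P: "i \<in> {1..k} \<Longrightarrow> A i \<subseteq> P"
  using maximal_antichain_A maximal_antichain_subset by blast

lemma antichain_A: "i \<in> {1..k} \<Longrightarrow> x \<in> A i \<Longrightarrow> y \<in> A i \<Longrightarrow> le x y \<Longrightarrow> x = y"
  using maximal_antichain_A unfolding maximal_antichain_def antichain_on_def by blast

lemma card_A: "i \<in> {1..k} \<Longrightarrow> card (A i) = rel_width P le"
  using maximum_antichain_A unfolding maximum_antichain_def by blast

lemma A_nonempty: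
  assumes "i \<in> {1..k}"
  shows "A i \<noteq> {}"
proof -
  obtain j where j: "j \<in> {1..k}" "A j \<noteq> {}" using nonempty Union_A by blast
  have "card (A j) > 0"
    using j finite_subset[OF A_subset_P finite_P] by (simp add: card_gt_0_iff)
  then show ?thesis using card_A[OF j(1)] card_A[OF assms] by auto
qed

lemma A_inj: "i \<in> {1..k} \<Longrightarrow> j \<in> {1..k} \<Longrightarrow> A i = A j \<Longrightarrow> i = j"
  using A_nonempty disjoint_A by blast

lemma layer_less_disjoint:
  "i \<in> {1..k} \<Longrightarrow> j \<in> {1..k} \<Longrightarrow> layer_less i j \<Longrightarrow> A i \<inter> A j = {}"
  using disjoint_A unfolding ac_less_def by blast

lemma layer_less_irrefl: "\<not> layer_less i i"
  unfolding ac_less_def by blast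

lemma layer_less_linear:
  "i \<in> {1..k} \<Longrightarrow> j \<in> {1..k} \<Longrightarrow> i \<noteq> j \<Longrightarrow> layer_less i j \<or> layer_less j i"
  unfolding ac_less_def using linear_A A_inj by blast

lemma layer_less_le: "layer_less i j \<Longrightarrow> ac_le P le (A i) (A j)"
  unfolding ac_less_def by blast

lemma layer_less_1_2: "layer_less 1 2"
  using bounds_A[OF one_two_layers(2)] A_inj[OF one_two_layers] unfolding ac_less_def by auto

lemma exists_lt_above:
  assumes "i \<in> {1..k}" "j \<in> {1..k}" "layer_less i j" "x \<in> A i"
  shows "\<exists>y\<in>A j. lt le x y"
  using ac_le_down[OF layer_less_le[OF assms(3)] assms(4)] layer_less_disjoint[OF assms(1-3)]
    assms(4)
  unfolding lt_def by blast

lemma exists_lt_below: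
  assumes "i \<in> {1..k}" "j \<in> {1..k}" "layer_less i j" "y \<in> A j"
  shows "\<exists>x\<in>A i. lt le x y"
  using ac_le_up[OF layer_less_le[OF assms(3)] assms(4)] layer_less_disjoint[OF assms(1-3)] assms(4)
  unfolding lt_def by blast

lemma not_le_layer_less:
  assumes "i \<in> {1..k}" "j \<in> {1..k}" "layer_less i j" "x \<in> A i" "y \<in> A j"
  shows "\<not> le y x"
proof
  assume yx: "le y x"
  obtain y' where y': "y' \<in> A j" "le x y'"
    using ac_le_down[OF layer_less_le[OF assms(3)] assms(4)] by blast
  have P: "x \<in> P" "y \<in> P" "y' \<in> P" using assms(1,2,4,5) y'(1) A_subset_P by blast+
  have "y = y'" using antichain_A[OF assms(2,5) y'(1)] le_trans_P[OF P(2,1,3) yx y'(2)] .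
  then have "x = y" using le_antisym_P[OF P(1,2)] yx y'(2) by blast
  then show False using layer_less_disjoint[OF assms(1-3)] assms(4,5) by blast
qed

lemma card_down_set_strict_mono:
  assumes "i \<in> {1..k}" "j \<in> {1..k}" "layer_less i j"
  shows "card (down_set P le (A i)) < card (down_set P le (A j))"
proof -
  have "down_set P le (A i) \<subseteq> down_set P le (A j)"
    using ac_le_down[OF layer_less_le[OF assms(3)]] A_subset_P assms(1,2)
    unfolding down_set_def by (blast intro: le_trans_P)
  moreover obtain y where y: "y \<in> A j" "y \<notin> down_set P le (A i)"
    using ac_less_not_ac_le[OF assms(3)] maximal_antichain_A assms(1,2) unfolding ac_le_def by blast
  moreover have "y \<in> down_set P le (A j)"
    using y(1) A_subset_P[OF assms(2)] le_refl_P unfolding down_set_def by blast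
  moreover have "finite (down_set P le (A j))"
    using finite_P unfolding down_set_def by simp
  ultimately show ?thesis by (intro psubset_card_mono) blast+
qed

lemma consecutive_layers:
  "consecutive P le A t p s \<Longrightarrow> t \<le> k \<Longrightarrow> p \<in> {1..k} \<and> s \<in> {1..k} \<and> layer_less p s"
  unfolding consecutive_def by auto

lemma consecutive_pred:
  "consecutive P le A t p s \<Longrightarrow> p \<noteq> t \<Longrightarrow> s \<noteq> t \<Longrightarrow> consecutive P le A (t - 1) p s"
  unfolding consecutive_def by auto

lemma consecutive_split:
  assumes ps: "consecutive P le A (t - 1) p s" "layer_less p t" "layer_less t s" and "1 \<le> t"
  shows "consecutive P le A t p t" "consecutive P le A t t s"
proof -
  have old: "q \<in> {1..t - 1}" if "q \<in> {1..t}" "layer_less q t \<or> layer_less t q" for q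
    using that layer_less_irrefl by (cases "q = t") auto
  have "p \<in> {1..t}" "s \<in> {1..t}" "t \<in> {1..t}"
    using ps(1) \<open>1 \<le> t\<close> unfolding consecutive_def by auto
  moreover have "\<not> (\<exists>q\<in>{1..t}. layer_less p q \<and> layer_less q t)"
    using old ps ac_less_trans unfolding consecutive_def by blast
  moreover have "\<not> (\<exists>q\<in>{1..t}. layer_less t q \<and> layer_less q s)"
    using old ps ac_less_trans unfolding consecutive_def by blast
  ultimately show "consecutive P le A t p t" "consecutive P le A t t s"
    using ps unfolding consecutive_def by blast+
qed

text \<open>The pair consists of the nearest layers below and above \<open>A t\<close> among
  \<open>A 1, \<dots>, A (t - 1)\<close>; they maximize resp. minimize the rank \<open>card (down_set P le (A q))\<close>.\<close>

lemma insertion_pair: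
  assumes t: "t \<in> {3..k}"
  obtains p s where "consecutive P le A (t - 1) p s" "layer_less p t" "layer_less t s"
proof -
  define rank where "rank q = card (down_set P le (A q))" for q
  define below where "below q \<longleftrightarrow> q \<in> {1..t - 1} \<and> layer_less q t" for q
  define above where "above q \<longleftrightarrow> q \<in> {1..t - 1} \<and> layer_less t q" for q
  have tk: "t \<in> {1..k}" using t by auto
  have "1 \<in> {1..t - 1}" "2 \<in> {1..t - 1}" "A 1 \<noteq> A t" "A t \<noteq> A 2"
    using t A_inj[OF one_two_layers(1) tk] A_inj[OF tk one_two_layers(2)] by auto
  then have "below 1" "above 2"
    using bounds_A[OF tk] unfolding below_def above_def ac_less_def by blast+
  moreover have "rank q < Suc (card P)" for q
    using finite_P card_mono[of P "down_set P le (A q)"] unfolding rank_def down_set_def by auto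
  ultimately obtain p s where p: "below p" "\<And>q. below q \<Longrightarrow> rank q \<le> rank p"
    and s: "above s" "\<And>q. above q \<Longrightarrow> rank s \<le> rank q"
    using Lattices_Big.ex_has_greatest_nat[of below 1 rank] ex_has_least_nat[of above 2 rank]
    by metis
  have "consecutive P le A (t - 1) p s"
    unfolding consecutive_def
  proof (intro conjI)
    show "p \<in> {1..t - 1}" "s \<in> {1..t - 1}" "layer_less p s"
      using p(1) s(1) ac_less_trans unfolding below_def above_def by blast+
    show "\<not> (\<exists>q\<in>{1..t - 1}. layer_less p q \<and> layer_less q s)"
    proof
      assume "\<exists>q\<in>{1..t - 1}. layer_less p q \<and> layer_less q s"
      then obtain q where q: "q \<in> {1..t - 1}" "layer_less p q" "layer_less q s" by blast
      have layers: "p \<in> {1..k}" "q \<in> {1..k}" "s \<in> {1..k}"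
        using p(1) s(1) q(1) t unfolding below_def above_def by auto
      have "q \<noteq> t" using q(1) t by auto
      then have "below q \<or> above q"
        using layer_less_linear[OF layers(2) tk] q(1) unfolding below_def above_def by blast
      then show False
        using p(2) s(2) card_down_set_strict_mono[OF layers(1,2) q(2)]
          card_down_set_strict_mono[OF layers(2,3) q(3)]
        unfolding rank_def by fastforce
    qed
  qed
  then show ?thesis using that p(1) s(1) unfolding below_def above_def by blast
qed

lemma insertion_pair_unique:
  assumes t: "t \<in> {3..k}"
    and ps: "consecutive P le A (t - 1) p s" "layer_less p t" "layer_less t s"
  shows "consecutive P le A t p' t \<Longrightarrow> p' = p" "consecutive P le A t t s' \<Longrightarrow> s' = s"
proof -
  have layers: "p \<in> {1..t - 1}" "s \<in> {1..t - 1}" "t \<in> {1..k}"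
    using ps(1) t unfolding consecutive_def by auto
  have between: "q \<in> {1..t - 1}" if "q \<in> {1..t}" "q \<noteq> t" for q
    using that by auto
  show "p' = p" if p': "consecutive P le A t p' t"
  proof (rule ccontr)
    assume "p' \<noteq> p"
    have p'_layer: "p' \<in> {1..t - 1}" "layer_less p' t"
      using p' between layer_less_irrefl unfolding consecutive_def by auto
    then consider "layer_less p p'" | "layer_less p' p"
      using layer_less_linear[of p p'] \<open>p' \<noteq> p\<close> layers t by force
    then show False
    proof cases
      case 1
      then show False using ps p'_layer ac_less_trans unfolding consecutive_def by blast
    next
      case 2
      then show False using p' ps(2) layers(1) unfolding consecutive_def by auto
    qed
  qed
  show "s' = s" if s': "consecutive P le A t t s'"
  proof (rule ccontr)
    assume "s' \<noteq> s"
    have s'_layer: "s' \<in> {1..t - 1}" "layer_less t s'"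
      using s' between layer_less_irrefl unfolding consecutive_def by auto
    then consider "layer_less s' s" | "layer_less s s'"
      using layer_less_linear[of s s'] \<open>s' \<noteq> s\<close> layers t by force
    then show False
    proof cases
      case 1
      then show False using ps s'_layer ac_less_trans unfolding consecutive_def by blast
    next
      case 2
      then show False using s' ps(3) layers(2) unfolding consecutive_def by auto
    qed
  qed
qed

section \<open>Nodes\<close>

definition node_in :: "nat \<Rightarrow> nat \<Rightarrow> 'a set \<times> 'a set \<Rightarrow> bool" where
  "node_in p s N \<longleftrightarrow> p \<in> {1..k} \<and> s \<in> {1..k} \<and> layer_less p s \<and> node_of le (A p) (A s) N"

lemma node_inD:
  assumes "node_in p s N"
  shows "p \<in> {1..k}" "s \<in> {1..k}" "layer_less p s" "node_of le (A p) (A s) N"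
    "fst N \<subseteq> A p" "snd N \<subseteq> A s" "fst N \<union> snd N \<subseteq> P" "A p \<inter> A s = {}"
  using assms A_subset_P layer_less_disjoint unfolding node_in_def node_of_def by blast+

lemma is_nodeE:
  assumes "is_node P le A k N"
  obtains t p s where "t \<in> {2..k}" "consecutive P le A t p s" "node_in p s N"
  using assms consecutive_layers unfolding is_node_def node_in_def by force

lemma node_in_up:
  assumes N: "node_in p s N" and "x \<in> fst N" "y \<in> A s" "lt le x y"
  shows "y \<in> snd N"
proof -
  have "bip_edge le (A p) (A s) x y"
    using assms node_inD[OF N] unfolding bip_edge_def by blast
  then show ?thesis
    using node_of_reach[OF node_inD(4)[OF N]] assms(2,3) node_inD(5,8)[OF N] by blast
qed

lemma node_in_down:
  assumes N: "node_in p s N" and "y \<in> snd N" "x \<in> A p" "lt le x y"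
  shows "x \<in> fst N"
proof -
  have "bip_edge le (A p) (A s) y x"
    using assms node_inD[OF N] unfolding bip_edge_def by blast
  then show ?thesis
    using node_of_reach[OF node_inD(4)[OF N]] assms(2,3) node_inD(6,8)[OF N] by blast
qed

lemma node_in_sides:
  assumes N: "node_in p s N"
  shows "x \<in> fst N \<Longrightarrow> \<exists>y\<in>snd N. lt le x y" "y \<in> snd N \<Longrightarrow> \<exists>x\<in>fst N. lt le x y"
    "fst N \<noteq> {}" "snd N \<noteq> {}"
proof -
  show up: "\<exists>y\<in>snd N. lt le x y" if "x \<in> fst N" for x
    using exists_lt_above[OF node_inD(1-3)[OF N]] node_in_up[OF N that] node_inD(5)[OF N] that
    by blast
  show down: "\<exists>x\<in>fst N. lt le x y" if "y \<in> snd N" for y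
    using exists_lt_below[OF node_inD(1-3)[OF N]] node_in_down[OF N that] node_inD(6)[OF N] that
    by blast
  have "fst N \<union> snd N \<noteq> {}"
    using node_inD(4)[OF N] unfolding node_of_def bip_component_def by blast
  then show "fst N \<noteq> {}" "snd N \<noteq> {}" using up down by blast+
qed

lemma vertices_subset_node_int:
  assumes N: "node_in p s N"
  shows "fst N \<union> snd N \<subseteq> node_int P le N"
  using node_in_sides(1,2)[OF N] node_inD(7)[OF N] le_refl_P
  unfolding node_int_def up_set_def down_set_def lt_def by blast

lemma mem_node_int_iff:
  assumes N: "node_in p s N" and i: "i \<in> {1..k}" "ac_le P le (A p) (A i)" "ac_le P le (A i) (A s)"
    and v: "v \<in> A i"
  shows "v \<in> node_int P le N \<longleftrightarrow> (\<exists>x\<in>fst N. le x v)"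
    and "v \<in> node_int P le N \<longleftrightarrow> (\<exists>y\<in>snd N. le v y)"
proof -
  have vP: "v \<in> P" using A_subset_P[OF i(1)] v by blast
  have "\<exists>y\<in>snd N. le v y" if x: "x \<in> fst N" "le x v" for x
  proof -
    obtain y where y: "y \<in> A s" "le v y" using ac_le_down[OF i(3) v] by blast
    have P: "x \<in> P" "y \<in> P" using x(1) y(1) node_inD(2,7)[OF N] A_subset_P by blast+
    have "lt le x y"
      using le_trans_P[OF P(1) vP P(2) x(2) y(2)] x(1) y(1) node_inD(5,8)[OF N]
      unfolding lt_def by blast
    then show ?thesis using node_in_up[OF N x(1) y(1)] y(2) by blast
  qed
  moreover have "\<exists>x\<in>fst N. le x v" if y: "y \<in> snd N" "le v y" for y
  proof -
    obtain x where x: "x \<in> A p" "le x v" using ac_le_up[OF i(2) v] by blast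
    have P: "x \<in> P" "y \<in> P" using x(1) y(1) node_inD(1,7)[OF N] A_subset_P by blast+
    have "lt le x y"
      using le_trans_P[OF P(1) vP P(2) x(2) y(2)] x(1) y(1) node_inD(6,8)[OF N]
      unfolding lt_def by blast
    then show ?thesis using node_in_down[OF N y(1) x(1)] x(2) by blast
  qed
  ultimately show "v \<in> node_int P le N \<longleftrightarrow> (\<exists>x\<in>fst N. le x v)"
    and "v \<in> node_int P le N \<longleftrightarrow> (\<exists>y\<in>snd N. le v y)"
    using vP unfolding node_int_def up_set_def down_set_def by blast+
qed

lemma node_int_Int_upper:
  assumes N: "node_in p s N"
  shows "node_int P le N \<inter> A s = snd N"
proof
  show "snd N \<subseteq> node_int P le N \<inter> A s"
    using vertices_subset_node_int[OF N] node_inD(6)[OF N] by blast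
  show "node_int P le N \<inter> A s \<subseteq> snd N"
  proof
    fix v assume v: "v \<in> node_int P le N \<inter> A s"
    then obtain y where y: "y \<in> snd N" "le v y" unfolding node_int_def down_set_def by blast
    then have "v = y" using antichain_A[OF node_inD(2)[OF N]] node_inD(6)[OF N] v by blast
    then show "v \<in> snd N" using y(1) by blast
  qed
qed

lemma node_int_closed:
  assumes N: "node_in p s N" and M: "node_in i j M"
    and layers: "ac_le P le (A p) (A i)" "ac_le P le (A j) (A s)"
    and v: "v \<in> fst M \<union> snd M" "v \<in> node_int P le N"
  shows "fst M \<union> snd M \<subseteq> node_int P le N"
proof
  have ij: "ac_le P le (A i) (A j)" using layer_less_le node_inD(3)[OF M] .
  have between: "l \<in> {1..k}" "ac_le P le (A p) (A l)" "ac_le P le (A l) (A s)" if "l \<in> {i, j}" for l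
    using that node_inD(1,2)[OF M] layers ac_le_trans[OF layers(1) ij] ac_le_trans[OF ij layers(2)]
    by auto
  note above = mem_node_int_iff(1)[OF N between] and below = mem_node_int_iff(2)[OF N between]
  have P: "A i \<subseteq> P" "A j \<subseteq> P" "fst N \<union> snd N \<subseteq> P"
    using A_subset_P node_inD[OF M] node_inD(7)[OF N] by blast+
  fix z assume "z \<in> fst M \<union> snd M"
  then have "(bip_edge le (A i) (A j))\<^sup>*\<^sup>* v z"
    using node_of_connected[OF node_inD(4)[OF M] v(1)] by blast
  then show "z \<in> node_int P le N"
  proof (induction rule: rtranclp_induct)
    case base
    then show ?case using v(2) .
  next
    case (step y z)
    then consider "y \<in> A i" "z \<in> A j" "le y z" | "z \<in> A i" "y \<in> A j" "le z y"
      unfolding bip_edge_def lt_def by blast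
    then show ?case
    proof cases
      case 1
      then obtain x where "x \<in> fst N" "le x y" using above[of i y] step.IH by blast
      moreover have "le x z" if "x \<in> fst N" "le x y" for x
        using le_trans_P that 1 P by blast
      ultimately show ?thesis using above[of j z] 1(2) by blast
    next
      case 2
      then obtain y' where "y' \<in> snd N" "le y y'" using below[of j y] step.IH by blast
      moreover have "le z y'" if "y' \<in> snd N" "le y y'" for y'
        using le_trans_P that 2 P by blast
      ultimately show ?thesis using below[of i z] 2(1) by blast
    qed
  qed
qed

lemma node_perfect_matching:
  assumes "is_node P le A k N"
  obtains f where "perfect_matching le (fst N) (snd N) f"
proof -
  obtain t p s where t: "t \<in> {2..k}" "consecutive P le A t p s" and N: "node_in p s N"
    using assms by (rule is_nodeE)
  obtain x y where xy: "x \<in> fst N" "y \<in> snd N" "lt le x y"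
    using node_in_sides(1,3)[OF N] by blast
  then have "x \<in> A p" "y \<in> A s" using node_inD(5,6)[OF N] by blast+
  then obtain f where "perfect_matching le (A p) (A s) f"
    using regular_consecutive[OF t] xy(3) unfolding regular_bip_def by blast
  then have f: "bij_betw f (A p) (A s)" "\<And>x. x \<in> A p \<Longrightarrow> lt le x (f x)"
    unfolding perfect_matching_def by blast+
  have "f ` fst N = snd N"
  proof
    show "f ` fst N \<subseteq> snd N"
      using f node_in_up[OF N] node_inD(5)[OF N] bij_betwE by blast
    show "snd N \<subseteq> f ` fst N"
    proof
      fix y assume y: "y \<in> snd N"
      then obtain x where "x \<in> A p" "y = f x"
        using f(1) node_inD(6)[OF N] bij_betw_imp_surj_on by blast
      then show "y \<in> f ` fst N" using node_in_down[OF N y] f(2) by blast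
    qed
  qed
  then have "bij_betw f (fst N) (snd N)"
    using bij_betw_subset[OF f(1) node_inD(5)[OF N]] by blast
  then show ?thesis using that f(2) node_inD(5)[OF N] unfolding perfect_matching_def by blast
qed

section \<open>The node tree\<close>

abbreviation child :: "'a set \<times> 'a set \<Rightarrow> 'a set \<times> 'a set \<Rightarrow> bool" where
  "child \<equiv> node_child P le A k"

text \<open>\<open>split_at t p s N\<close>: the children of the node \<open>N\<close> of \<open>(A p, A s, <)\<close> are the nodes
  created when \<open>A t\<close> is inserted between \<open>A p\<close> and \<open>A s\<close>.\<close>

definition split_at :: "nat \<Rightarrow> nat \<Rightarrow> nat \<Rightarrow> 'a set \<times> 'a set \<Rightarrow> bool" where
  "split_at t p s N \<longleftrightarrow> t \<in> {3..k} \<and> consecutive P le A (t - 1) p s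
     \<and> layer_less p t \<and> layer_less t s \<and> node_of le (A p) (A s) N"

lemma node_child_iff:
  "child M N \<longleftrightarrow> (\<exists>t p s. split_at t p s N
     \<and> (node_of le (A p) (A t) M \<or> node_of le (A t) (A s) M)
     \<and> node_int P le M \<subset> node_int P le N)"
  unfolding node_child_def split_at_def by blast

lemma split_atD:
  assumes "split_at t p s N"
  shows "t \<in> {3..k}" "t \<in> {1..k}" "p \<in> {1..k}" "s \<in> {1..k}"
    "layer_less p t" "layer_less t s" "node_in p s N"
    "consecutive P le A t p t" "consecutive P le A t t s"
    "node_of le (A p) (A t) M \<Longrightarrow> node_in p t M" "node_of le (A t) (A s) M \<Longrightarrow> node_in t s M"
proof -
  have c: "consecutive P le A (t - 1) p s" "layer_less p t" "layer_less t s" "t \<in> {3..k}"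
    using assms unfolding split_at_def by blast+
  show "t \<in> {3..k}" "t \<in> {1..k}" "layer_less p t" "layer_less t s" using c by auto
  show "p \<in> {1..k}" "s \<in> {1..k}" using consecutive_layers[OF c(1)] c(4) by auto
  then show "node_in p s N"
    using assms ac_less_trans[OF c(2,3)] unfolding split_at_def node_in_def by blast
  show "consecutive P le A t p t" "consecutive P le A t t s"
    using consecutive_split[OF c(1-3)] c(4) by auto
  show "node_of le (A p) (A t) M \<Longrightarrow> node_in p t M" "node_of le (A t) (A s) M \<Longrightarrow> node_in t s M"
    using c \<open>p \<in> {1..k}\<close> \<open>s \<in> {1..k}\<close> unfolding node_in_def by auto
qed

lemma split_at_unique:
  assumes "split_at t p s N" "split_at t' p' s' N"
  shows "t' = t \<and> p' = p \<and> s' = s"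
proof -
  note N = split_atD(7)[OF assms(1)] and N' = split_atD(7)[OF assms(2)]
  have "p' = p" "s' = s"
    using node_in_sides(3,4)[OF N] node_inD(1,2,5,6)[OF N] node_inD(1,2,5,6)[OF N'] disjoint_A
    by blast+
  moreover have "t' = t"
  proof (rule ccontr)
    assume "t' \<noteq> t"
    then have "t \<in> {1..t' - 1} \<or> t' \<in> {1..t - 1}"
      using split_atD(1)[OF assms(1)] split_atD(1)[OF assms(2)] by auto
    then show False
      using assms \<open>p' = p\<close> \<open>s' = s\<close> unfolding split_at_def consecutive_def by blast
  qed
  ultimately show ?thesis by blast
qed

lemma node_int_disjoint_above:
  assumes M: "node_in i j M" and "s \<in> {1..k}" "layer_less j s"
  shows "node_int P le M \<inter> A s = {}"
proof -
  have "\<not> le y b" if "y \<in> A s" "b \<in> snd M" for y b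
    using not_le_layer_less[OF node_inD(2)[OF M] assms(2,3)] node_inD(6)[OF M] that by blast
  then show ?thesis unfolding node_int_def down_set_def by blast
qed

lemma node_int_disjoint_below:
  assumes M: "node_in i j M" and "p \<in> {1..k}" "layer_less p i"
  shows "node_int P le M \<inter> A p = {}"
proof -
  have "\<not> le b x" if "x \<in> A p" "b \<in> fst M" for x b
    using not_le_layer_less[OF assms(2) node_inD(1)[OF M] assms(3)] node_inD(5)[OF M] that by blast
  then show ?thesis unfolding node_int_def up_set_def by blast
qed

lemma node_childI:
  assumes split: "split_at t p s N"
    and M: "node_of le (A p) (A t) M \<or> node_of le (A t) (A s) M"
    and v: "v \<in> fst M \<union> snd M" "v \<in> node_int P le N"
  shows "child M N"
proof -
  note N = split_atD(7)[OF split] and layers = split_atD(2-6)[OF split]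
  note refl_p = ac_le_refl[OF maximal_antichain_A[OF layers(2)]]
  note refl_s = ac_le_refl[OF maximal_antichain_A[OF layers(3)]]
  have "fst M \<union> snd M \<subseteq> node_int P le N \<and> (fst N \<union> snd N) - node_int P le M \<noteq> {}"
    using M
  proof
    assume "node_of le (A p) (A t) M"
    then have M': "node_in p t M" by (rule split_atD(10)[OF split])
    show ?thesis
      using node_int_closed[OF N M' refl_p layer_less_le[OF layers(5)] v]
        node_int_disjoint_above[OF M' layers(3,5)] node_in_sides(4)[OF N] node_inD(6)[OF N]
      by blast
  next
    assume "node_of le (A t) (A s) M"
    then have M': "node_in t s M" by (rule split_atD(11)[OF split])
    show ?thesis
      using node_int_closed[OF N M' layer_less_le[OF layers(4)] refl_s v]
        node_int_disjoint_below[OF M' layers(2,4)] node_in_sides(3)[OF N] node_inD(5)[OF N]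
      by blast
  qed
  then have "node_int P le M \<subset> node_int P le N"
    using node_int_mono[OF node_inD(7)[OF N]] vertices_subset_node_int[OF N] by blast
  then show ?thesis using split M unfolding node_child_iff by blast
qed

lemma node_child_cases:
  assumes split: "split_at t p s N" and "child M N"
  shows "node_of le (A p) (A t) M \<or> node_of le (A t) (A s) M"
    and "fst M \<union> snd M \<subseteq> node_int P le N"
proof -
  obtain t' p' s' where "split_at t' p' s' N"
    and M: "node_of le (A p') (A t') M \<or> node_of le (A t') (A s') M"
    and int: "node_int P le M \<subset> node_int P le N"
    using assms(2) unfolding node_child_iff by blast
  then show M': "node_of le (A p) (A t) M \<or> node_of le (A t) (A s) M"
    using split_at_unique[OF split] by blast
  then have "fst M \<union> snd M \<subseteq> node_int P le M"
    using vertices_subset_node_int split_atD(10,11)[OF split] by blast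
  then show "fst M \<union> snd M \<subseteq> node_int P le N" using int by blast
qed

lemma is_node_child:
  assumes "child M N"
  shows "is_node P le A k M"
proof -
  obtain t p s where split: "split_at t p s N"
    and "node_of le (A p) (A t) M \<or> node_of le (A t) (A s) M"
    using assms unfolding node_child_iff by blast
  moreover have "t \<in> {2..k}" using split_atD(1)[OF split] by auto
  ultimately show ?thesis
    using split_atD(8,9)[OF split] unfolding is_node_def by blast
qed

lemma card_node_int_child:
  assumes "child M N"
  shows "card (node_int P le M) < card (node_int P le N)"
proof -
  have "finite (node_int P le N)"
    using finite_P unfolding node_int_def up_set_def by simp
  then show ?thesis
    using assms psubset_card_mono unfolding node_child_iff by blast
qed

definition root :: "'a set \<times> 'a set" where
  "root = (A 1, A 2)"

lemma node_in_root: "node_in 1 2 root"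
proof -
  let ?E = "bip_edge le (A 1) (A 2)"
  obtain a0 b0 where a0: "a0 \<in> A 1" and b0: "b0 \<in> A 2"
    using A_nonempty one_two_layers by blast
  have edge: "?E a b" "?E b a" if "a \<in> A 1" "b \<in> A 2" for a b
    using bottom_below_top[OF that] that unfolding bip_edge_def by blast+
  have from_a0: "?E\<^sup>*\<^sup>* a0 z" if "z \<in> A 1 \<union> A 2" for z
  proof (cases "z \<in> A 2")
    case True
    then show ?thesis using edge(1)[OF a0] by blast
  next
    case False
    then have "?E b0 z" using edge(2)[OF _ b0] that by blast
    then show ?thesis using edge(1)[OF a0 b0] by (blast intro: converse_rtranclp_into_rtranclp)
  qed
  have "bip_component le (A 1) (A 2) (A 1 \<union> A 2)"
    unfolding bip_component_def
  proof (intro conjI ballI allI impI)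
    show "A 1 \<union> A 2 \<noteq> {}" "A 1 \<union> A 2 \<subseteq> A 1 \<union> A 2" using a0 by blast+
  next
    fix x y assume "x \<in> A 1 \<union> A 2" "y \<in> A 1 \<union> A 2"
    then show "?E\<^sup>*\<^sup>* x y"
      using from_a0 bip_edge_rtranclp_sym rtranclp_trans by metis
  next
    fix x y assume "?E x y"
    then show "y \<in> A 1 \<union> A 2" unfolding bip_edge_def by blast
  qed
  then show ?thesis
    using layer_less_1_2 one_two_layers unfolding node_in_def node_of_def root_def by simp
qed

lemma is_node_root: "is_node P le A k root"
proof -
  have "\<not> (\<exists>q\<in>{1..2}. layer_less 1 q \<and> layer_less q 2)"
  proof
    assume "\<exists>q\<in>{1..2}. layer_less 1 q \<and> layer_less q 2"
    then obtain q where "q \<in> {1..2}" "layer_less 1 q" "layer_less q 2" by blast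
    moreover have "q = 1 \<or> q = 2" using \<open>q \<in> {1..2}\<close> by auto
    ultimately show False using layer_less_irrefl by blast
  qed
  then have "consecutive P le A 2 1 2"
    using layer_less_1_2 unfolding consecutive_def by auto
  moreover have "(2::nat) \<in> {2..k}" using two_le_k by simp
  ultimately show ?thesis
    using node_inD(4)[OF node_in_root] unfolding is_node_def by blast
qed

lemma node_in_root_unique:
  assumes K: "node_in 1 2 K"
  shows "K = root"
proof -
  obtain x where "x \<in> fst K" using node_in_sides(3)[OF K] by blast
  then have "x \<in> fst K \<union> snd K" "x \<in> fst root \<union> snd root"
    using node_inD(5)[OF K] unfolding root_def by auto
  then show ?thesis
    using node_of_eq[OF node_inD(8,4)[OF K] node_inD(4)[OF node_in_root]] by blast
qed

lemma exists_parent: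
  assumes ins: "t \<in> {3..k}" "consecutive P le A (t - 1) p s" "layer_less p t" "layer_less t s"
    and K: "node_of le (A p) (A t) K \<or> node_of le (A t) (A s) K"
  obtains N where "node_of le (A p) (A s) N" "child K N"
proof -
  have split: "split_at t p s (bip_node_at le (A p) (A s) v)" if "v \<in> A p \<union> A s" for v
    using ins node_of_bip_node_at[OF that] unfolding split_at_def by blast
  have layers: "p \<in> {1..k}" "s \<in> {1..k}" "t \<in> {1..k}"
    using consecutive_layers[OF ins(2)] ins(1) by auto
  obtain v where v: "v \<in> fst K \<union> snd K" "v \<in> A p \<union> A s"
  proof (rule disjE[OF K])
    assume "node_of le (A p) (A t) K"
    then have "node_in p t K" using layers ins(3) unfolding node_in_def by blast
    then show thesis using that node_in_sides(3) node_inD(5) by blast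
  next
    assume "node_of le (A t) (A s) K"
    then have "node_in t s K" using layers ins(4) unfolding node_in_def by blast
    then show thesis using that node_in_sides(4) node_inD(6) by blast
  qed
  let ?N = "bip_node_at le (A p) (A s) v"
  have "v \<in> node_int P le ?N"
    using vertices_subset_node_int[OF split_atD(7)[OF split[OF v(2)]]] mem_bip_node_at[OF v(2)]
    by blast
  then show thesis
    using that node_childI[OF split[OF v(2)] K v(1)] node_of_bip_node_at[OF v(2)] by blast
qed

lemma reaches_root_from_stage:
  "t \<in> {2..k} \<Longrightarrow> consecutive P le A t p s \<Longrightarrow> node_of le (A p) (A s) K \<Longrightarrow> child\<^sup>*\<^sup>* K root"
proof (induction t arbitrary: p s K rule: less_induct)
  case (less t)
  have layers: "p \<in> {1..t}" "s \<in> {1..t}" "layer_less p s"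
    using less.prems(2) unfolding consecutive_def by blast+
  show ?case
  proof (cases "t = 2")
    case True
    have "\<not> layer_less 2 1"
      using layer_less_1_2 ac_less_not_ac_le layer_less_le by blast
    then have "p = 1" "s = 2"
      using layers layer_less_irrefl True by (auto simp: le_Suc_eq numeral_2_eq_2)
    then have "node_in 1 2 K"
      using less.prems(3) layer_less_1_2 one_two_layers unfolding node_in_def by simp
    then show ?thesis using node_in_root_unique by simp
  next
    case False
    then have t: "t \<in> {3..k}" "t - 1 \<in> {2..k}" "t - 1 < t" using less.prems(1) by auto
    obtain p0 s0 where ins: "consecutive P le A (t - 1) p0 s0" "layer_less p0 t" "layer_less t s0"
      using insertion_pair[OF t(1)] .
    show ?thesis
    proof (cases "p \<noteq> t \<and> s \<noteq> t")
      case True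
      then show ?thesis using less.IH[OF t(3,2) consecutive_pred] less.prems by blast
    next
      case False
      with insertion_pair_unique[OF t(1) ins] less.prems(2,3)
      have "node_of le (A p0) (A t) K \<or> node_of le (A t) (A s0) K" by blast
      then obtain N where "node_of le (A p0) (A s0) N" "child K N"
        using exists_parent[OF t(1) ins] by blast
      then show ?thesis
        using less.IH[OF t(3,2) ins(1)] by (blast intro: converse_rtranclp_into_rtranclp)
    qed
  qed
qed

lemma node_reaches_root: "is_node P le A k K \<Longrightarrow> child\<^sup>*\<^sup>* K root"
  using reaches_root_from_stage unfolding is_node_def by blast

lemma child_on_path:
  assumes "child\<^sup>*\<^sup>* K N" "K \<noteq> N"
  shows "\<exists>M. child M N \<and> child\<^sup>*\<^sup>* K M"
  using assms by (cases rule: rtranclp.cases) blast+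

definition children_in :: "nat \<Rightarrow> nat \<Rightarrow> 'a set \<times> 'a set \<Rightarrow> ('a set \<times> 'a set) set" where
  "children_in i j N = {M. child M N \<and> node_of le (A i) (A j) M}"

lemma finite_children_in:
  assumes "i \<in> {1..k}" "j \<in> {1..k}"
  shows "finite (children_in i j N)"
proof (rule finite_subset)
  show "children_in i j N \<subseteq> Pow P \<times> Pow P"
    using A_subset_P[OF assms(1)] A_subset_P[OF assms(2)]
    unfolding children_in_def node_of_def by auto
  show "finite (Pow P \<times> Pow P)" using finite_P by simp
qed

lemma children_in_disjoint:
  assumes "i \<in> {1..k}" "j \<in> {1..k}" "layer_less i j"
  shows "disjoint_family_on fst (children_in i j N)" "disjoint_family_on snd (children_in i j N)"
  using node_of_disjoint[OF layer_less_disjoint[OF assms]]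
  unfolding disjoint_family_on_def children_in_def by blast+

lemma child_in_children_in:
  assumes "split_at t p s N" "child M N"
  shows "M \<in> children_in p t N \<union> children_in t s N"
  using node_child_cases(1)[OF assms] assms(2) unfolding children_in_def by blast

lemma lower_upper_children_disjoint:
  assumes split: "split_at t p s N"
  shows "children_in p t N \<inter> children_in t s N = {}"
proof -
  have "fst M = {}" if "node_of le (A p) (A t) M" "node_of le (A t) (A s) M" for M
    using that layer_less_disjoint[OF split_atD(3,2,5)[OF split]] unfolding node_of_def by blast
  then show ?thesis
    using node_in_sides(3) split_atD(10)[OF split] unfolding children_in_def by blast
qed

lemma fst_subset_lower_children:
  assumes split: "split_at t p s N"
  shows "fst N \<subseteq> (\<Union>L\<in>children_in p t N. fst L)"
proof
  fix x assume x: "x \<in> fst N"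
  then have xp: "x \<in> A p \<union> A t" using node_inD(5)[OF split_atD(7)[OF split]] by blast
  let ?L = "bip_node_at le (A p) (A t) x"
  have L: "node_of le (A p) (A t) ?L" using node_of_bip_node_at[OF xp] .
  have "x \<in> fst ?L \<union> snd ?L" using mem_bip_node_at[OF xp] .
  moreover have "x \<in> node_int P le N"
    using x vertices_subset_node_int[OF split_atD(7)[OF split]] by blast
  ultimately have "child ?L N" using node_childI[OF split] L by blast
  moreover have "x \<in> fst ?L"
    using \<open>x \<in> fst ?L \<union> snd ?L\<close> x node_inD(5,6,8)[OF split_atD(10)[OF split L]]
      layer_less_disjoint[OF split_atD(3,2,5)[OF split]] node_inD(5)[OF split_atD(7)[OF split]]
    by blast
  ultimately show "x \<in> (\<Union>L\<in>children_in p t N. fst L)"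
    using L unfolding children_in_def by blast
qed

lemma lower_children_snd_subset:
  assumes split: "split_at t p s N"
  shows "(\<Union>L\<in>children_in p t N. snd L) \<subseteq> (\<Union>U\<in>children_in t s N. fst U)"
proof
  fix v assume "v \<in> (\<Union>L\<in>children_in p t N. snd L)"
  then obtain L where L: "child L N" "node_of le (A p) (A t) L" "v \<in> snd L"
    unfolding children_in_def by blast
  have vt: "v \<in> A t \<union> A s" using L(3) node_inD(6)[OF split_atD(10)[OF split L(2)]] by blast
  have "v \<in> node_int P le N" using node_child_cases(2)[OF split L(1)] L(3) by blast
  let ?U = "bip_node_at le (A t) (A s) v"
  have U: "node_of le (A t) (A s) ?U" using node_of_bip_node_at[OF vt] .
  have "v \<in> fst ?U \<union> snd ?U" using mem_bip_node_at[OF vt] .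
  then have "child ?U N" using node_childI[OF split] U \<open>v \<in> node_int P le N\<close> by blast
  moreover have "v \<in> fst ?U"
    using \<open>v \<in> fst ?U \<union> snd ?U\<close> L(3) node_inD(6)[OF split_atD(10)[OF split L(2)]]
      node_inD(6)[OF split_atD(11)[OF split U]] layer_less_disjoint[OF split_atD(2,4,6)[OF split]]
    by blast
  ultimately show "v \<in> (\<Union>U\<in>children_in t s N. fst U)"
    using U unfolding children_in_def by blast
qed

lemma upper_child_snd_subset:
  assumes split: "split_at t p s N" and U: "U \<in> children_in t s N"
  shows "snd U \<subseteq> snd N"
proof -
  have "snd U \<subseteq> node_int P le N \<inter> A s"
    using node_child_cases(2)[OF split] node_inD(6)[OF split_atD(11)[OF split]] U
    unfolding children_in_def by blast
  then show ?thesis using node_int_Int_upper[OF split_atD(7)[OF split]] by blast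
qed

lemma dilworth_clique_sides:
  assumes K: "is_node P le A k K" and C: "dilworth_clique le K m C"
  obtains xs ys f where "inj_on ys {..<m}" "C \<inter> fst K = xs ` {..<m}" "C \<inter> snd K = ys ` {..<m}"
    "C \<subseteq> fst K \<union> snd K" "\<forall>i<m. \<forall>j<m. lt le (xs i) (ys j)"
    "perfect_matching le (fst K) (snd K) f" "\<forall>i<m. f (xs i) = ys i"
proof -
  obtain t p s where "node_in p s K" using K by (rule is_nodeE)
  then have disj: "fst K \<inter> snd K = {}" using node_inD(5,6,8) by blast
  obtain xs ys f where inj: "inj_on ys {..<m}"
    and sides: "xs ` {..<m} \<subseteq> fst K" "ys ` {..<m} \<subseteq> snd K"
    and rest: "\<forall>i<m. \<forall>j<m. lt le (xs i) (ys j)" "perfect_matching le (fst K) (snd K) f"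
      "\<forall>i<m. f (xs i) = ys i"
    and C_eq: "C = xs ` {..<m} \<union> ys ` {..<m}"
    using C unfolding dilworth_clique_def by blast
  have "C \<inter> fst K = xs ` {..<m}" "C \<inter> snd K = ys ` {..<m}" "C \<subseteq> fst K \<union> snd K"
    using sides disj unfolding C_eq by blast+
  then show thesis using that[OF inj _ _ _ rest] by blast
qed

lemma dilworth_clique_matched:
  assumes "is_node P le A k K" "dilworth_clique le K m C"
  shows "card (C \<inter> snd K) = m"
    and "\<exists>f. perfect_matching le (fst K) (snd K) f \<and> f ` (C \<inter> fst K) = C \<inter> snd K"
proof -
  obtain xs ys f where inj: "inj_on ys {..<m}"
    and CX: "C \<inter> fst K = xs ` {..<m}" and CY: "C \<inter> snd K = ys ` {..<m}"
    and f: "perfect_matching le (fst K) (snd K) f" "\<forall>i<m. f (xs i) = ys i"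
    by (rule dilworth_clique_sides[OF assms])
  show "card (C \<inter> snd K) = m" unfolding CY using card_image[OF inj] by simp
  have "f ` (C \<inter> fst K) = C \<inter> snd K"
    unfolding CX CY image_image using f(2) by (intro image_cong) auto
  then show "\<exists>f. perfect_matching le (fst K) (snd K) f \<and> f ` (C \<inter> fst K) = C \<inter> snd K"
    using f(1) by blast
qed

lemma dilworth_clique_extremal:
  assumes K: "is_node P le A k K" and C: "dilworth_clique le K m C"
  shows "y \<in> C \<inter> snd K \<Longrightarrow> maximal_in le C y" and "x \<in> C \<inter> fst K \<Longrightarrow> minimal_in le C x"
proof -
  obtain t p s where "node_in p s K" using K by (rule is_nodeE)
  note K' = node_inD[OF this]
  obtain xs ys where CX: "C \<inter> fst K = xs ` {..<m}" and CY: "C \<inter> snd K = ys ` {..<m}"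
    and C_sub: "C \<subseteq> fst K \<union> snd K" and clique: "\<forall>i<m. \<forall>j<m. lt le (xs i) (ys j)"
    by (rule dilworth_clique_sides[OF K C])
  have complete: "lt le x y" if "x \<in> C \<inter> fst K" "y \<in> C \<inter> snd K" for x y
    using that clique unfolding CX CY by blast
  have asym: "\<not> lt le y x" if "x \<in> C \<inter> fst K" "y \<in> C \<inter> snd K" for x y
    using complete[OF that] le_antisym_P that K'(7) unfolding lt_def by blast
  show "maximal_in le C y" if y: "y \<in> C \<inter> snd K"
    using C_sub asym y antichain_A[OF K'(2)] K'(6) unfolding maximal_in_def lt_def by blast
  show "minimal_in le C x" if x: "x \<in> C \<inter> fst K"
    using C_sub asym x antichain_A[OF K'(1)] K'(5) unfolding minimal_in_def lt_def by blast
qed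

end

section \<open>Counting the tops of cliques along the node tree\<close>

lemma card_layer_bound:
  fixes F H :: "'i \<Rightarrow> 'a set" and a :: "'i \<Rightarrow> nat"
  assumes "finite I" "finite B" "B \<subseteq> (\<Union>i\<in>I. F i)"
    and "disjoint_family_on F I" "disjoint_family_on H I" "\<And>i. i \<in> I \<Longrightarrow> finite (H i)"
    and "\<And>i. i \<in> I \<Longrightarrow> card (B \<inter> F i) + c * a i \<le> card (H i)"
  shows "card B + c * (\<Sum>i\<in>I. a i) \<le> card (\<Union>i\<in>I. H i)"
proof -
  have "B = (\<Union>i\<in>I. B \<inter> F i)" using assms(3) by blast
  moreover have "disjoint_family_on (\<lambda>i. B \<inter> F i) I"
    using assms(4) unfolding disjoint_family_on_def by blast
  ultimately have "card B = (\<Sum>i\<in>I. card (B \<inter> F i))"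
    using card_UN_disjoint'[of "\<lambda>i. B \<inter> F i" I] assms(1,2) by simp
  then have "card B + c * (\<Sum>i\<in>I. a i) = (\<Sum>i\<in>I. card (B \<inter> F i) + c * a i)"
    by (simp add: sum.distrib sum_distrib_left)
  also have "\<dots> \<le> (\<Sum>i\<in>I. card (H i))"
    using assms(7) by (rule sum_mono)
  also have "\<dots> = card (\<Union>i\<in>I. H i)"
    using card_UN_disjoint'[OF assms(5,6,1)] by simp
  finally show ?thesis .
qed

lemma card_eq_sum_fibres:
  assumes "finite X" "finite I" "finite J" "I \<inter> J = {}" "g ` X \<subseteq> I \<union> J"
  shows "card X = (\<Sum>i\<in>I. card {x \<in> X. g x = i}) + (\<Sum>j\<in>J. card {x \<in> X. g x = j})"
proof -
  have "card X = (\<Sum>i\<in>I \<union> J. card {x \<in> X. g x = i})"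
    using sum.group[OF assms(1) finite_UnI[OF assms(2,3)] assms(5), of "\<lambda>_. 1 :: nat"] by simp
  then show ?thesis using sum.union_disjoint[OF assms(2-4)] by simp
qed

text \<open>\<open>low K\<close> and \<open>high K\<close> stand for the halves \<open>R(K) \<inter> X\<close> and \<open>R(K) \<inter> Y\<close> of the Dilworth
  clique of a node \<open>K = (X, Y)\<close>, and \<open>c\<close> for its width \<open>\<lceil>\<surd>w\<rceil>\<close>.\<close>

locale clique_family = regular_order +
  fixes S :: "('a set \<times> 'a set) set"
    and low high :: "'a set \<times> 'a set \<Rightarrow> 'a set"
    and c :: nat
  assumes finite_S: "finite S"
    and S_nodes: "K \<in> S \<Longrightarrow> is_node P le A k K"
    and low_subset: "K \<in> S \<Longrightarrow> low K \<subseteq> fst K"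
    and card_high: "K \<in> S \<Longrightarrow> card (high K) = c"
    and matched: "K \<in> S \<Longrightarrow> \<exists>f. perfect_matching le (fst K) (snd K) f \<and> f ` low K = high K"
    and high_not_below_low:
      "K \<in> S \<Longrightarrow> K' \<in> S \<Longrightarrow> K \<noteq> K' \<Longrightarrow> high K \<inter> down_set P le (low K') = {}"
    and unnested: "K \<in> S \<Longrightarrow> K' \<in> S \<Longrightarrow> K \<noteq> K' \<Longrightarrow> \<not> (node_child P le A k)\<^sup>+\<^sup>+ K K'"
begin

lemma high_subset:
  assumes "K \<in> S"
  shows "high K \<subseteq> snd K"
proof -
  obtain f where f: "bij_betw f (fst K) (snd K)" "f ` low K = high K"
    using matched[OF assms] unfolding perfect_matching_def by blast
  have "f ` low K \<subseteq> f ` fst K" using low_subset[OF assms] by (rule image_mono)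
  then show ?thesis using f bij_betw_imp_surj_on[OF f(1)] by simp
qed

lemma clique_subset_P: "K \<in> S \<Longrightarrow> low K \<union> high K \<subseteq> P"
  using low_subset high_subset is_node_subset_P[OF regular S_nodes] by blast

definition shadow :: "'a set \<times> 'a set \<Rightarrow> ('a set \<times> 'a set) set \<Rightarrow> 'a set \<Rightarrow> 'a set" where
  "shadow N AA B = snd N \<inter> up_set P le (B \<union> (\<Union>K\<in>AA. high K))"

lemma finite_shadow: "finite (shadow N AA B)"
  using finite_P unfolding shadow_def up_set_def by simp

lemma shadow_mono:
  assumes "snd M \<subseteq> snd N" "B' \<subseteq> up_set P le (B \<union> (\<Union>K\<in>AA. high K))" "AA' \<subseteq> AA"
    and "B \<subseteq> P" "AA \<subseteq> S"
  shows "shadow M AA' B' \<subseteq> shadow N AA B"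
proof -
  let ?C = "B \<union> (\<Union>K\<in>AA. high K)"
  have CP: "?C \<subseteq> P" using assms(4,5) clique_subset_P by blast
  have "(\<Union>K\<in>AA'. high K) \<subseteq> ?C" using assms(3) by blast
  then have "B' \<union> (\<Union>K\<in>AA'. high K) \<subseteq> up_set P le ?C"
    using assms(2) subset_up_set[OF CP] by blast
  then have "up_set P le (B' \<union> (\<Union>K\<in>AA'. high K)) \<subseteq> up_set P le (up_set P le ?C)"
    by (rule up_set_mono)
  also have "\<dots> \<subseteq> up_set P le ?C"
    using up_set_up_set_subset[OF CP] .
  finally have "up_set P le (B' \<union> (\<Union>K\<in>AA'. high K)) \<subseteq> up_set P le ?C" .
  then show ?thesis using assms(1) unfolding shadow_def by blast
qed

lemma base_matching:
  assumes N: "is_node P le A k N" and AA: "AA \<subseteq> S \<inter> {N}"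
  obtains f where "perfect_matching le (fst N) (snd N) f"
    "f ` (\<Union>K\<in>AA. low K) = (\<Union>K\<in>AA. high K)" "card (\<Union>K\<in>AA. high K) = c * card AA"
proof (cases "AA = {}")
  case True
  then show ?thesis using that node_perfect_matching[OF N] by auto
next
  case False
  then have "AA = {N}" "N \<in> S" using AA by blast+
  then show ?thesis using that matched[of N] card_high[of N] by auto
qed

lemma card_shadow_base:
  assumes N: "is_node P le A k N" and AA: "AA \<subseteq> S \<inter> {N}"
    and B: "B \<subseteq> fst N" "B \<inter> down_set P le (\<Union>K\<in>AA. low K) = {}"
  shows "card B + c * card AA \<le> card (shadow N AA B)"
proof -
  obtain f where f: "perfect_matching le (fst N) (snd N) f"
    and img: "f ` (\<Union>K\<in>AA. low K) = (\<Union>K\<in>AA. high K)"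
    and card_H: "card (\<Union>K\<in>AA. high K) = c * card AA"
    by (rule base_matching[OF N AA])
  have bij: "bij_betw f (fst N) (snd N)" and up: "\<And>x. x \<in> fst N \<Longrightarrow> lt le x (f x)"
    using f unfolding perfect_matching_def by blast+
  have NP: "fst N \<union> snd N \<subseteq> P" using is_node_subset_P[OF regular N] .
  have lowN: "(\<Union>K\<in>AA. low K) \<subseteq> fst N" and highN: "(\<Union>K\<in>AA. high K) \<subseteq> snd N"
    using AA low_subset high_subset by blast+
  have inj: "inj_on f (fst N)" using bij unfolding bij_betw_def by blast
  have CP: "B \<union> (\<Union>K\<in>AA. high K) \<subseteq> P" using B(1) highN NP by blast
  have "f ` B \<subseteq> shadow N AA B"
  proof (rule image_subsetI)
    fix b assume b: "b \<in> B"
    then have "f b \<in> snd N" "le b (f b)"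
      using B(1) bij_betwE[OF bij] up unfolding lt_def by blast+
    then show "f b \<in> shadow N AA B"
      using b NP unfolding shadow_def up_set_def by blast
  qed
  moreover have "(\<Union>K\<in>AA. high K) \<subseteq> shadow N AA B"
    using highN subset_up_set[OF CP] unfolding shadow_def by blast
  ultimately have sub: "f ` B \<union> (\<Union>K\<in>AA. high K) \<subseteq> shadow N AA B" by blast
  have "(\<Union>K\<in>AA. low K) \<subseteq> down_set P le (\<Union>K\<in>AA. low K)"
    using lowN NP subset_down_set by blast
  then have "B \<inter> (\<Union>K\<in>AA. low K) = {}" using B(2) by blast
  then have disj: "f ` B \<inter> (\<Union>K\<in>AA. high K) = {}"
    using inj_on_image_Int[OF inj B(1) lowN] img by simp
  have card_fB: "card (f ` B) = card B"
    using card_image inj_on_subset[OF inj B(1)] by blast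
  have fin: "finite (\<Union>K\<in>AA. high K)" "finite B"
    using CP finite_P finite_subset by blast+
  have "card B + c * card AA = card (f ` B \<union> (\<Union>K\<in>AA. high K))"
    using card_Un_disjoint[OF finite_imageI[OF fin(2)] fin(1) disj] card_fB card_H by simp
  also have "\<dots> \<le> card (shadow N AA B)"
    using card_mono[OF finite_shadow sub] .
  finally show ?thesis .
qed

lemma card_shadow_layer:
  assumes "finite LL" "disjoint_family_on fst LL" "disjoint_family_on snd LL"
    and "finite B" "B \<subseteq> (\<Union>M\<in>LL. fst M)"
    and IH: "\<And>M B'. M \<in> LL \<Longrightarrow> B' \<subseteq> fst M \<Longrightarrow> B' \<inter> down_set P le (\<Union>K\<in>F M. low K) = {}
      \<Longrightarrow> card B' + c * card (F M) \<le> card (shadow M (F M) B')"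
    and free: "\<And>M. M \<in> LL \<Longrightarrow> B \<inter> fst M \<inter> down_set P le (\<Union>K\<in>F M. low K) = {}"
  shows "card B + c * (\<Sum>M\<in>LL. card (F M)) \<le> card (\<Union>M\<in>LL. shadow M (F M) (B \<inter> fst M))"
proof (rule card_layer_bound[OF assms(1,4,5,2) _ finite_shadow IH[OF _ Int_lower2 free]])
  show "disjoint_family_on (\<lambda>M. shadow M (F M) (B \<inter> fst M)) LL"
    using assms(3) unfolding disjoint_family_on_def shadow_def by blast
qed

lemma shadow_subset_up_set:
  "B' \<subseteq> B \<Longrightarrow> AA' \<subseteq> AA \<Longrightarrow> shadow M AA' B' \<subseteq> up_set P le (B \<union> (\<Union>K\<in>AA. high K))"
  unfolding shadow_def by (rule order_trans[OF Int_lower2 up_set_mono]) blast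

lemma up_set_disjoint_low:
  assumes "AA \<subseteq> S" "B \<subseteq> P" "B \<inter> down_set P le (\<Union>K\<in>AA. low K) = {}" "AA' \<subseteq> AA"
  shows "up_set P le (B \<union> (\<Union>K\<in>AA - AA'. high K)) \<inter> down_set P le (\<Union>K\<in>AA'. low K) = {}"
proof (rule up_set_disjoint_down_set)
  show "B \<union> (\<Union>K\<in>AA - AA'. high K) \<subseteq> P" "(\<Union>K\<in>AA'. low K) \<subseteq> P"
    using assms(1,2,4) clique_subset_P by blast+
  have "B \<inter> down_set P le (\<Union>K\<in>AA'. low K) = {}"
    using assms(3) down_set_mono[of "\<Union>K\<in>AA'. low K" "\<Union>K\<in>AA. low K"] assms(4) by blast
  moreover have "high K \<inter> down_set P le (low K') = {}" if "K \<in> AA - AA'" "K' \<in> AA'" for K K'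
    using high_not_below_low that assms(1,4) by blast
  ultimately show "(B \<union> (\<Union>K\<in>AA - AA'. high K)) \<inter> down_set P le (\<Union>K\<in>AA'. low K) = {}"
    unfolding down_set_def by blast
qed

text \<open>\<open>W\<close> is what the lower children of \<open>N\<close> leave in the middle layer \<open>A t\<close>; it is the set of
  sources for the upper children.\<close>

lemma card_shadow_split:
  assumes split: "split_at t p s N"
    and IH: "\<And>M AA' B'. child M N \<Longrightarrow> AA' \<subseteq> S \<Longrightarrow> \<forall>K\<in>AA'. child\<^sup>*\<^sup>* K M \<Longrightarrow> B' \<subseteq> fst M
      \<Longrightarrow> B' \<inter> down_set P le (\<Union>K\<in>AA'. low K) = {}
      \<Longrightarrow> card B' + c * card AA' \<le> card (shadow M AA' B')"
    and AA: "AA \<subseteq> S"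
    and g: "\<And>K. K \<in> AA \<Longrightarrow> g K \<in> children_in p t N \<union> children_in t s N \<and> child\<^sup>*\<^sup>* K (g K)"
    and B: "B \<subseteq> fst N" "B \<inter> down_set P le (\<Union>K\<in>AA. low K) = {}"
  shows "card B + c * card AA \<le> card (shadow N AA B)"
proof -
  define LL UU where "LL = children_in p t N" and "UU = children_in t s N"
  define fibre where "fibre M = {K \<in> AA. g K = M}" for M
  note layers = split_atD(2-6)[OF split]
  have fin: "finite LL" "finite UU"
    using finite_children_in layers unfolding LL_def UU_def by blast+
  have disj: "disjoint_family_on fst LL" "disjoint_family_on snd LL"
    "disjoint_family_on fst UU" "disjoint_family_on snd UU"
    using children_in_disjoint layers unfolding LL_def UU_def by blast+
  have card_AA: "card AA = (\<Sum>M\<in>LL. card (fibre M)) + (\<Sum>M\<in>UU. card (fibre M))"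
    using card_eq_sum_fibres[OF finite_subset[OF AA finite_S] fin]
      lower_upper_children_disjoint[OF split] g
    unfolding fibre_def LL_def UU_def by blast
  have IH': "card B' + c * card (fibre M) \<le> card (shadow M (fibre M) B')"
    if "M \<in> LL \<union> UU" "B' \<subseteq> fst M" "B' \<inter> down_set P le (\<Union>K\<in>fibre M. low K) = {}" for M B'
    using IH[of M "fibre M" B'] that g AA unfolding fibre_def LL_def UU_def children_in_def
    by blast
  have BP: "B \<subseteq> P" using B(1) node_inD(7)[OF split_atD(7)[OF split]] by blast
  define W where "W = (\<Union>L\<in>LL. shadow L (fibre L) (B \<inter> fst L))"
  have lower: "card B + c * (\<Sum>M\<in>LL. card (fibre M)) \<le> card W"
    unfolding W_def
  proof (rule card_shadow_layer[OF fin(1) disj(1,2) _ _ IH'])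
    show "finite B" using BP finite_P finite_subset by blast
    show "B \<subseteq> (\<Union>L\<in>LL. fst L)"
      using B(1) fst_subset_lower_children[OF split] unfolding LL_def by blast
    show "B \<inter> fst L \<inter> down_set P le (\<Union>K\<in>fibre L. low K) = {}" for L
      using B(2) down_set_mono[of "\<Union>K\<in>fibre L. low K" "\<Union>K\<in>AA. low K"]
      unfolding fibre_def by blast
  qed simp
  have W_up: "W \<subseteq> up_set P le (B \<union> (\<Union>K\<in>AA - fibre U. high K))" if "U \<in> UU" for U
  proof -
    have "fibre L \<subseteq> AA - fibre U" if "L \<in> LL" for L
      using that \<open>U \<in> UU\<close> lower_upper_children_disjoint[OF split]
      unfolding fibre_def LL_def UU_def by blast
    then show ?thesis
      unfolding W_def using shadow_subset_up_set[OF Int_lower1] by (meson UN_least)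
  qed
  have upper: "card W + c * (\<Sum>M\<in>UU. card (fibre M))
      \<le> card (\<Union>U\<in>UU. shadow U (fibre U) (W \<inter> fst U))"
  proof (rule card_shadow_layer[OF fin(2) disj(3,4) _ _ IH'])
    show "finite W" using fin(1) finite_shadow unfolding W_def by blast
    show "W \<subseteq> (\<Union>U\<in>UU. fst U)"
      using lower_children_snd_subset[OF split] unfolding W_def shadow_def LL_def UU_def by blast
    show "W \<inter> fst U \<inter> down_set P le (\<Union>K\<in>fibre U. low K) = {}" if "U \<in> UU" for U
      using W_up[OF that] up_set_disjoint_low[OF AA BP B(2), of "fibre U"]
      unfolding fibre_def by blast
  qed simp
  have "shadow U (fibre U) (W \<inter> fst U) \<subseteq> shadow N AA B" if U: "U \<in> UU" for U
  proof (rule shadow_mono[OF upper_child_snd_subset[OF split U[unfolded UU_def]] _ _ BP AA])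
    show "W \<inter> fst U \<subseteq> up_set P le (B \<union> (\<Union>K\<in>AA. high K))"
      using W_up[OF U] up_set_mono[of "B \<union> (\<Union>K\<in>AA - fibre U. high K)" "B \<union> (\<Union>K\<in>AA. high K)"]
      by blast
    show "fibre U \<subseteq> AA" unfolding fibre_def by blast
  qed
  then have "card (\<Union>U\<in>UU. shadow U (fibre U) (W \<inter> fst U)) \<le> card (shadow N AA B)"
    by (intro card_mono[OF finite_shadow] UN_least)
  then show ?thesis using lower upper card_AA by (simp add: distrib_left)
qed

lemma card_shadow:
  assumes "is_node P le A k N" "AA \<subseteq> S" "\<forall>K\<in>AA. child\<^sup>*\<^sup>* K N"
    and "B \<subseteq> fst N" "B \<inter> down_set P le (\<Union>K\<in>AA. low K) = {}"
  shows "card B + c * card AA \<le> card (shadow N AA B)"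
  using assms
proof (induction "card (node_int P le N)" arbitrary: N AA B rule: less_induct)
  case less
  show ?case
  proof (cases "AA \<subseteq> {N}")
    case True
    with less.prems(2) have "AA \<subseteq> S \<inter> {N}" by (rule Int_greatest)
    then show ?thesis using card_shadow_base[OF less.prems(1) _ less.prems(4,5)] by blast
  next
    case False
    then obtain K where K: "K \<in> AA" "K \<noteq> N" by blast
    then have "child\<^sup>+\<^sup>+ K N" using less.prems(3) by (meson rtranclpD)
    then have "N \<notin> AA" using unnested K less.prems(2) by blast
    then have "\<forall>K\<in>AA. \<exists>M. child M N \<and> child\<^sup>*\<^sup>* K M"
      using child_on_path less.prems(3) by blast
    then obtain g where g: "\<And>K. K \<in> AA \<Longrightarrow> child (g K) N \<and> child\<^sup>*\<^sup>* K (g K)"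
      using bchoice by metis
    then obtain t p s where split: "split_at t p s N"
      using K(1) unfolding node_child_iff by blast
    show ?thesis
    proof (rule card_shadow_split[OF split _ less.prems(2) _ less.prems(4,5)])
      show "g K \<in> children_in p t N \<union> children_in t s N \<and> child\<^sup>*\<^sup>* K (g K)" if "K \<in> AA" for K
        using g[OF that] child_in_children_in[OF split] by blast
    qed (use less.hyps card_node_int_child is_node_child in blast)
  qed
qed

lemma card_mult_le_width: "c * card S \<le> rel_width P le"
proof -
  have "c * card S \<le> card (shadow root S {})"
    using card_shadow[OF is_node_root subset_refl _ empty_subsetI] node_reaches_root S_nodes by simp
  also have "\<dots> \<le> card (A 2)"
    using card_mono[OF finite_subset[OF A_subset_P finite_P]] one_two_layers(2)
    unfolding shadow_def root_def by (metis Int_lower1 snd_conv)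
  also have "\<dots> = rel_width P le" using card_A one_two_layers by blast
  finally show ?thesis .
qed

end

lemma le_floor_sqrt_if_ceiling_sqrt_mult_le:
  fixes w m :: nat
  assumes "nat \<lceil>sqrt (real w)\<rceil> * m \<le> w" "0 < w"
  shows "m \<le> nat \<lfloor>sqrt (real w)\<rfloor>"
proof -
  define r where "r = sqrt (real w)"
  have r: "0 < r" "r * r = real w" using assms(2) unfolding r_def by simp_all
  have "real m * r \<le> real m * real (nat \<lceil>r\<rceil>)"
    using r(1) by (intro mult_left_mono) linarith+
  also have "\<dots> \<le> r * r"
    using assms(1) r(2) unfolding r_def by (metis of_nat_le_iff of_nat_mult mult.commute)
  finally have "real m \<le> r" using r(1) by simp
  then have "int m \<le> \<lfloor>r\<rfloor>" by (simp add: le_floor_iff)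
  then show ?thesis unfolding r_def by linarith
qed

context regular_order
begin

lemma clique_family_active_antichain:
  assumes R: "\<forall>N. active P le A k N \<longrightarrow> dilworth_clique le N (clique_size P le) (R N)"
    and S: "antichain_on (active_nodes P le A k u s) (\<lambda>N K. N = K \<or> node_less le R N K) S"
  shows "clique_family P le A k S (\<lambda>K. R K \<inter> fst K) (\<lambda>K. R K \<inter> snd K) (clique_size P le)"
proof -
  have S_active: "active P le A k K" "characteristics P le K = (u, s)" if "K \<in> S" for K
    using S that unfolding antichain_on_def active_nodes_def by blast+
  have S_nodes: "is_node P le A k K" if "K \<in> S" for K
    using S_active(1)[OF that] unfolding active_def by blast
  have clique: "dilworth_clique le K (clique_size P le) (R K)" if "K \<in> S" for K
    using R S_active(1)[OF that] by blast
  note matched = dilworth_clique_matched[OF S_nodes clique]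
    and extremal = dilworth_clique_extremal[OF S_nodes clique]
  show ?thesis
  proof (unfold_locales)
    have "S \<subseteq> Pow P \<times> Pow P"
      using S_nodes is_node_subset_P[OF regular] by fastforce
    then show "finite S" using finite_subset finite_P by blast
    show "is_node P le A k K" if "K \<in> S" for K using S_nodes[OF that] .
    show "R K \<inter> fst K \<subseteq> fst K" for K by blast
    show "card (R K \<inter> snd K) = clique_size P le" if "K \<in> S" for K
      using matched(1)[OF that that] .
    show "\<exists>f. perfect_matching le (fst K) (snd K) f \<and> f ` (R K \<inter> fst K) = R K \<inter> snd K"
      if "K \<in> S" for K
      using matched(2)[OF that that] .
    show "R K \<inter> snd K \<inter> down_set P le (R K' \<inter> fst K') = {}"
      if "K \<in> S" "K' \<in> S" "K \<noteq> K'" for K K'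
    proof -
      have "\<not> node_less le R K K'" using S that unfolding antichain_on_def by blast
      then show ?thesis
        using extremal(1)[OF that(1) that(1)] extremal(2)[OF that(2) that(2)]
        unfolding node_less_def down_set_def by blast
    qed
    show "\<not> child\<^sup>+\<^sup>+ K K'" if "K \<in> S" "K' \<in> S" "K \<noteq> K'" for K K'
      using S_active[OF that(1)] S_active(2)[OF that(2)] unfolding active_def by metis
  qed
qed

lemma card_active_antichain:
  assumes R: "\<forall>N. active P le A k N \<longrightarrow> dilworth_clique le N (clique_size P le) (R N)"
    and S: "antichain_on (active_nodes P le A k u s) (\<lambda>N K. N = K \<or> node_less le R N K) S"
  shows "card S \<le> nat \<lfloor>sqrt (real (rel_width P le))\<rfloor>"
proof (rule le_floor_sqrt_if_ceiling_sqrt_mult_le)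
  show "nat \<lceil>sqrt (real (rel_width P le))\<rceil> * card S \<le> rel_width P le"
    using clique_family.card_mult_le_width[OF clique_family_active_antichain[OF R S]]
    unfolding clique_size_def .
  show "0 < rel_width P le"
    using card_A[OF one_two_layers(1)] A_nonempty[OF one_two_layers(1)]
      finite_subset[OF A_subset_P[OF one_two_layers(1)] finite_P] card_gt_0_iff
    by metis
qed

end

lemma finite_active_nodes:
  assumes "regular_poset P le A k"
  shows "finite (active_nodes P le A k u s)"
proof -
  have "active_nodes P le A k u s \<subseteq> Pow P \<times> Pow P"
    using is_node_subset_P[OF assms] unfolding active_nodes_def active_def by fastforce
  moreover have "finite P" using assms unfolding regular_poset_def by blast
  ultimately show ?thesis by (meson finite_Pow_iff finite_SigmaI finite_subset)
qed

theorem lemma13: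
  fixes P :: "'a set" and le :: "'a \<Rightarrow> 'a \<Rightarrow> bool" and A :: "nat \<Rightarrow> 'a set" and k :: nat
    and R :: "'a set \<times> 'a set \<Rightarrow> 'a set" and u :: nat and s :: enat
  assumes "regular_poset P le A k"
    and "\<forall>N. active P le A k N \<longrightarrow> dilworth_clique le N (clique_size P le) (R N)"
  shows "rel_width (active_nodes P le A k u s) (\<lambda>N K. N = K \<or> node_less le R N K)
           \<le> nat \<lfloor>sqrt (real (rel_width P le))\<rfloor>"
proof -
  let ?D = "active_nodes P le A k u s" and ?r = "\<lambda>N K. N = K \<or> node_less le R N K"
  have "finite {S. antichain_on ?D ?r S}"
    using finite_active_nodes[OF assms(1)]
    by (rule finite_subset[rotated, OF finite_Pow_iff[THEN iffD2]]) (auto simp: antichain_on_def)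
  moreover have "{} \<in> {S. antichain_on ?D ?r S}" unfolding antichain_on_def by blast
  moreover have "card S \<le> nat \<lfloor>sqrt (real (rel_width P le))\<rfloor>" if S: "antichain_on ?D ?r S" for S
  proof (cases "S = {}")
    case False
    then obtain N where "N \<in> S" by blast
    then have "is_node P le A k N"
      using S unfolding antichain_on_def active_nodes_def active_def by blast
    then have "P \<noteq> {}" using is_node_subset_P[OF assms(1)] is_node_nonempty by blast
    then interpret regular_order P le A k using assms(1) by unfold_locales
    show ?thesis using card_active_antichain[OF assms(2) S] .
  qed simp
  ultimately show ?thesis
    unfolding rel_width_def by (intro Max.boundedI) auto
qed

end
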